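(* Let $n\ge 2$, $m\ge 1$, and let $\underline{q}_k<\overline{q}_k$ be real numbers, $k=1,\dots,m$; put $\mathbf{Q}=\prod_{k=1}^m[\underline{q}_k,\overline{q}_k]$. Let $A(\mathbf{q})=(a_{ij}(\mathbf{q}))_{n\times n}$, $\mathbf{q}=(q_1,\dots,q_m)^T$, where each $a_{ij}$ is a real rational function whose denominator does not vanish on $\mathbf{Q}$, and let $\mathbf{A}=\{A(\mathbf{q}):\mathbf{q}\in\mathbf{Q}\}$. Assume that $A(\mathbf{q}^* )$ is Hurwitz stable for at least one $\mathbf{q}^*\in\mathbf{Q}$. Let $a_0(\mathbf{q})$ be the constant coefficient of $\det(sI_n-A(\mathbf{q}))$ and $\Delta_{n-1}(\mathbf{q})$ the $(n-1)$-th leading principal minor of its Hurwitz matrix; both are rational functions of $\mathbf{q}$. Write $a_0=N_1/D_1$ and $\Delta_{n-1}=N_2/D_2$ with polynomials $N_i,D_i$ such that $D_i$ does not vanish on $\mathbf{Q}$, and set $f_i=N_iD_i$ ($i=1,2$). Let $g_i(x_1,\dots,x_m)=f_i(\underline{q}_1+(\overline{q}_1-\underline{q}_1)x_1,\dots,\underline{q}_m+(\overline{q}_m-\underline{q}_m)x_m)$, and let $h_i(q_0,x_1,\dots,x_m)=q_0^{\deg g_i}\,g_i(x_1/q_0,\dots,x_m/q_0)$ be its homogenization. Enumerate the $m!$ permutations of $\{1,\dots,m\}$ as $\theta_j=(j_1j_2\dots j_m)$, $j=1,\dots,m!$. Working in $\mathbb{R}^{m+1}$ with coordinates indexed $0,1,\dots,m$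 and unit vectors $\mathbf{e}_0,\dots,\mathbf{e}_m$, let $V_j$ be the $(m+1)\times(m+1)$ matrix with columns $\mathbf{v}_{j0}=\mathbf{e}_0$ and $\mathbf{v}_{jk}=\mathbf{e}_0+\mathbf{e}_{j_1}+\cdots+\mathbf{e}_{j_k}$ for $k=1,\dots,m$ (these are the nonzero vertices of $\{1\ge q_0\ge x_{j_1}\ge\cdots\ge x_{j_m}\ge 0\}$), and define the forms $\hat h_{ij}(\hat{\mathbf{q}})=h_i(V_j\hat{\mathbf{q}})$, $\hat{\mathbf{q}}\in\mathbb{R}^{m+1}$. Then $\mathbf{A}$ is robustly Hurwitz stable if and only if the following $2\,m!$ conditions hold: $\hat h_{ij}(\hat{\mathbf{q}})>0$ for all $\hat{\mathbf{q}}\in\tilde S_{m+1}$, for $i=1,2$ and $j=1,\dots,m!$.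
   Context: A real square matrix is Hurwitz stable if all its eigenvalues lie in the open left half of the complex plane; a set of matrices is robustly Hurwitz stable if each of its members is Hurwitz stable. The Hurwitz matrix of $s^n+a_{n-1}s^{n-1}+\cdots+a_0$ is the $n\times n$ matrix $(h_{ij})$ with $h_{ij}=a_{n-2j+i}$, where $a_n=1$ and $a_k=0$ for $k<0$ or $k>n$. $\tilde S_{m+1}=\{(t_0,\dots,t_m)\in\mathbb{R}^{m+1}:\sum_i t_i=1,\ t_i\ge 0\}$ is the standard simplex. *)

theory Defs
  imports "HOL-Library.Poly_Mapping" "HOL-Combinatorics.Permutations"
    "Jordan_Normal_Form.Determinant" "Jordan_Normal_Form.Char_Poly"
begin

type_synonym mpoly = "(nat \<Rightarrow>\<^sub>0 nat) \<Rightarrow>\<^sub>0 real"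

definition mpoly_eval :: "mpoly \<Rightarrow> (nat \<Rightarrow> real) \<Rightarrow> real" where
  "mpoly_eval p x = (\<Sum>mn\<in>Poly_Mapping.keys p. Poly_Mapping.lookup p mn * (\<Prod>i\<in>Poly_Mapping.keys mn. x i ^ Poly_Mapping.lookup mn i))"

definition mpoly_vars :: "mpoly \<Rightarrow> nat set" where
  "mpoly_vars p = \<Union> (Poly_Mapping.keys ` Poly_Mapping.keys p)"

text \<open>Total degree of a monomial and of a polynomial (the zero polynomial gets degree 0).\<close>
definition mon_deg :: "(nat \<Rightarrow>\<^sub>0 nat) \<Rightarrow> nat" where
  "mon_deg mn = (\<Sum>i\<in>Poly_Mapping.keys mn. Poly_Mapping.lookup mn i)"

definition mpoly_deg :: "mpoly \<Rightarrow> nat" where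
  "mpoly_deg p = Max (insert 0 (mon_deg ` Poly_Mapping.keys p))"

definition mpoly_subst :: "(nat \<Rightarrow> mpoly) \<Rightarrow> mpoly \<Rightarrow> mpoly" where
  "mpoly_subst s p = (\<Sum>mn\<in>Poly_Mapping.keys p. Poly_Mapping.single 0 (Poly_Mapping.lookup p mn) * (\<Prod>i\<in>Poly_Mapping.keys mn. s i ^ Poly_Mapping.lookup mn i))"

definition mpoly_var :: "nat \<Rightarrow> mpoly" where
  "mpoly_var i = Poly_Mapping.single (Poly_Mapping.single i 1) 1"

definition mpoly_const :: "real \<Rightarrow> mpoly" where
  "mpoly_const c = Poly_Mapping.single 0 c"

definition affine_change :: "(nat \<Rightarrow> real) \<Rightarrow> (nat \<Rightarrow> real) \<Rightarrow> mpoly \<Rightarrow> mpoly" where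
  "affine_change ql qu f =
     mpoly_subst (\<lambda>k. mpoly_const (ql k) + mpoly_const (qu k - ql k) * mpoly_var k) f"

text \<open>Homogenization with respect to the new variable with index 0 (the polynomials
  homogenized here only involve variables 1..m):
  h(q_0,x_1,...,x_m) = q_0^(deg g) g(x_1/q_0, ..., x_m/q_0).\<close>
definition homogenize :: "mpoly \<Rightarrow> mpoly" where
  "homogenize g = (\<Sum>mn\<in>Poly_Mapping.keys g.
      Poly_Mapping.single (mn + Poly_Mapping.single 0 (mpoly_deg g - mon_deg mn)) (Poly_Mapping.lookup g mn))"

definition hurwitz_stable :: "real mat \<Rightarrow> bool" where
  "hurwitz_stable A \<longleftrightarrow> (\<forall>z. eigenvalue (map_mat complex_of_real A) z \<longrightarrow> Re z < 0)"

definition hurwitz_matrix :: "real poly \<Rightarrow> real mat" where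
  "hurwitz_matrix p = (let n = degree p in
     mat n n (\<lambda>(i,j). let k = int n - 2 * (int j + 1) + (int i + 1) in
                       if 0 \<le> k \<and> k \<le> int n then coeff p (nat k) else 0))"

definition lead_minor :: "real mat \<Rightarrow> nat \<Rightarrow> real" where
  "lead_minor H k = det (mat k k (\<lambda>(i,j). H $$ (i,j)))"

definition box :: "nat \<Rightarrow> (nat \<Rightarrow> real) \<Rightarrow> (nat \<Rightarrow> real) \<Rightarrow> (nat \<Rightarrow> real) set" where
  "box m ql qu = {q. (\<forall>k\<in>{1..m}. ql k \<le> q k \<and> q k \<le> qu k) \<and> (\<forall>k. k \<notin> {1..m} \<longrightarrow> q k = 0)}"

definition std_simplex :: "nat \<Rightarrow> real vec set" where
  "std_simplex m = {t \<in> carrier_vec (m+1). (\<forall>i<m+1. 0 \<le> t $ i) \<and> (\<Sum>i<m+1. t $ i) = 1}"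

definition vertex_matrix :: "nat \<Rightarrow> (nat \<Rightarrow> nat) \<Rightarrow> real mat" where
  "vertex_matrix m \<theta> = mat (m+1) (m+1)
     (\<lambda>(r,k). if r = 0 \<or> r \<in> \<theta> ` {1..k} then 1 else 0)"

definition vec_point :: "nat \<Rightarrow> real vec \<Rightarrow> (nat \<Rightarrow> real)" where
  "vec_point m y = (\<lambda>r. if r \<le> m then y $ r else 0)"

end

theory Submission
  imports Defs
begin

text \<open>
  Splitting off a linear factor \<open>s + c\<close>
    from a monic polynomial multiplies its top Hurwitz determinant \<open>\<Delta>\<^sub>n\<^sub>-\<^sub>1\<close> by the value of
    the cofactor at \<open>c\<close> (an Orlando-type identity).  Induction over the roots shows
    \<open>\<Delta>\<^sub>n\<^sub>-\<^sub>1 > 0\<close> for stable polynomials, and a root on the imaginary axis forces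
    \<open>a\<^sub>0 = 0\<close> or \<open>\<Delta>\<^sub>n\<^sub>-\<^sub>1 = 0\<close>.
  \<^item> Continuity of eigenvalues (third section).  Along a continuous path of matrices
    without imaginary eigenvalues, stability can neither be gained nor lost.  With the
    previous point this gives (seventh section): a family, continuous on a star-shaped set
    and containing one stable member, is robustly stable iff \<open>a\<^sub>0 > 0\<close> and
    \<open>\<Delta>\<^sub>n\<^sub>-\<^sub>1 > 0\<close> on the whole set.
  \<^item> Simplicial subdivision of the cube (fourth to sixth sections).  The vertex matrices of
    the \<open>m!\<close> permutations map the standard simplex onto the simplices of the Kuhn
    triangulation of the unit cube; composing with the affine map to the box and
    dehomogenizing turns positivity of \<open>f\<^sub>i = N\<^sub>i D\<^sub>i\<close> (which has the sign of \<open>N\<^sub>i / D\<^sub>i\<close>)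
    on the box into positivity of the forms \<open>h\<^sub>i\<^sub>j(V\<^sub>j t)\<close> on the simplex.
\<close>

section \<open>Hurwitz determinants and linear factors\<close>

definition hcoeff :: "'a::comm_ring_1 poly \<Rightarrow> int \<Rightarrow> 'a" where
  "hcoeff p k = (if k < 0 then 0 else coeff p (nat k))"

text \<open>Keeping \<open>d\<close>
  separate from \<open>degree p\<close> allows the same block to be formed for shifted index patterns.\<close>
definition hurwitz_block :: "'a::comm_ring_1 poly \<Rightarrow> nat \<Rightarrow> nat \<Rightarrow> 'a mat" where
  "hurwitz_block p d k = mat k k (\<lambda>(i,j). hcoeff p (int d - 1 + int i - 2 * int j))"

definition hurwitz_det :: "'a::comm_ring_1 poly \<Rightarrow> nat \<Rightarrow> nat \<Rightarrow> 'a" where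
  "hurwitz_det p d k = det (hurwitz_block p d k)"

lemma hurwitz_det_0 [simp]: "hurwitz_det p d 0 = 1"
  unfolding hurwitz_det_def hurwitz_block_def by (simp add: det_def)

lemma lead_minor_hurwitz_matrix:
  assumes "degree p = n" "n \<ge> 1"
  shows "lead_minor (hurwitz_matrix p) (n - 1) = hurwitz_det p n (n - 1)"
  unfolding lead_minor_def hurwitz_det_def
proof (rule arg_cong[of _ _ det], rule eq_matI)
  fix i j assume "i < dim_row (hurwitz_block p n (n - 1))" "j < dim_col (hurwitz_block p n (n - 1))"
  then have i: "i < n - 1" and j: "j < n - 1" by (auto simp: hurwitz_block_def)
  have k: "int n - 2 * (int j + 1) + (int i + 1) = int n - 1 + int i - 2 * int j" by simp
  show "mat (n - 1) (n - 1) (\<lambda>(i, j). hurwitz_matrix p $$ (i, j)) $$ (i, j)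
      = hurwitz_block p n (n - 1) $$ (i, j)"
    using i j assms unfolding hurwitz_matrix_def hurwitz_block_def Let_def hcoeff_def k
    by (auto simp: algebra_simps intro!: coeff_eq_0)
qed (auto simp: hurwitz_block_def)

lemma hcoeff_beyond_degree: "k > int (degree q) \<Longrightarrow> hcoeff q k = 0"
  unfolding hcoeff_def by (auto intro!: coeff_eq_0)

lemma hcoeff_linear_factor: "hcoeff ([:c,1:] * q) k = hcoeff q (k - 1) + c * hcoeff q k"
proof -
  have e: "[:c,1:] * q = Polynomial.smult c q + pCons 0 q" by (simp add: mult_pCons_left)
  show ?thesis
  proof (cases "k \<le> 0")
    case True then show ?thesis unfolding e hcoeff_def by auto
  next
    case False
    then obtain m where "k = int (Suc m)" by (metis gr0_implies_Suc not_le zero_less_imp_eq_int of_nat_0_less_iff)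
    moreover have "nat (int (Suc m) - 1) = m" by simp
    ultimately show ?thesis unfolding e hcoeff_def by (simp del: of_nat_Suc)
  qed
qed

text \<open>The symmetry behind Hurwitz matrices: for odd \<open>S\<close>, the alternating self-convolution
  \<open>\<Sum>\<^sub>a (-1)\<^sup>a q\<^sub>a q\<^sub>S\<^sub>-\<^sub>a\<close> vanishes, since \<open>a \<mapsto> S - a\<close> pairs terms of opposite sign.\<close>
lemma alternating_convolution_odd:
  fixes q :: "'a::field_char_0 poly"
  assumes S: "odd S" and D: "int (degree q) \<le> D"
  shows "(\<Sum>a\<in>{0..D}. (if even a then 1 else -1) * hcoeff q a * hcoeff q (S - a)) = 0"
proof -
  define g where "g a = (if even a then 1 else -1) * hcoeff q a * hcoeff q (S - a)" for a
  define J where "J = {a. 0 \<le> a \<and> a \<le> D \<and> 0 \<le> S - a \<and> S - a \<le> D}"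
  have outside: "(\<Sum>a\<in>{0..D}. g a) = (\<Sum>a\<in>J. g a)"
  proof (rule sum.mono_neutral_right)
    show "\<forall>i\<in>{0..D} - J. g i = 0"
    proof
      fix i assume "i \<in> {0..D} - J"
      then have "S - i < 0 \<or> S - i > int (degree q)" using D unfolding J_def by auto
      then show "g i = 0" using hcoeff_beyond_degree[of q "S - i"] unfolding g_def hcoeff_def by auto
    qed
  qed (auto simp: J_def)
  have "(\<Sum>a\<in>J. g a) = (\<Sum>a\<in>J. g (S - a))"
    by (rule sum.reindex_bij_witness[of _ "\<lambda>a. S - a" "\<lambda>a. S - a"]) (auto simp: J_def)
  also have "\<dots> = (\<Sum>a\<in>J. - g a)"
  proof (rule sum.cong[OF refl])
    fix a
    have "even (S - a) \<longleftrightarrow> \<not> even a" using S by (simp add: even_diff)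
    then show "g (S - a) = - g a" unfolding g_def by auto
  qed
  finally have "(\<Sum>a\<in>J. g a) = - (\<Sum>a\<in>J. g a)" by (simp add: sum_negf)
  then have "2 * (\<Sum>a\<in>J. g a) = 0" by (metis add.right_inverse mult_2)
  then have "(\<Sum>a\<in>J. g a) = 0" by simp
  then show ?thesis using outside unfolding g_def by simp
qed

lemma hurwitz_row_relation:
  fixes q :: "'a::field_char_0 poly"
  assumes N: "degree q = N"
  shows "(\<Sum>i<Suc N. (-1)^i * coeff q (N - i) * hcoeff q (int N - 1 + int i - 2 * int j)) = 0"
proof -
  define S where "S = 2 * int N - 1 - 2 * int j"
  have reindex: "(\<Sum>a\<in>{0..int N}. (-1)^N * ((if even a then 1 else -1) * hcoeff q a * hcoeff q (S - a)))
     = (\<Sum>i<Suc N. (-1)^i * coeff q (N - i) * hcoeff q (int N - 1 + int i - 2 * int j))"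
  proof (rule sum.reindex_bij_witness[of _ "\<lambda>i. int N - int i" "\<lambda>a. nat (int N - a)"])
    fix a assume "a \<in> {0..int N}"
    then obtain b where b: "a = int b" "b \<le> N" by (metis atLeastAtMost_iff nonneg_int_cases of_nat_le_iff)
    have sign: "((-1)::'a) ^ (N - b) = (-1)^N * (if even b then 1 else -1)"
      using b(2) by (cases "even b") (auto simp: even_diff_nat minus_one_power_iff)
    have idx: "int N - 1 + int (N - b) - 2 * int j = S - a" using b unfolding S_def by simp
    show "nat (int N - a) \<in> {..<Suc N}" "int N - int (nat (int N - a)) = a" using b by auto
    show "(-1) ^ nat (int N - a) * coeff q (N - nat (int N - a)) *
        hcoeff q (int N - 1 + int (nat (int N - a)) - 2 * int j)
      = (-1)^N * ((if even a then 1 else -1) * hcoeff q a * hcoeff q (S - a))"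
    proof -
      have "N - nat (int N - a) = b" using b by simp
      then have "coeff q (N - nat (int N - a)) = hcoeff q a" using b unfolding hcoeff_def by simp
      moreover have "nat (int N - a) = N - b" using b by simp
      moreover have "even a \<longleftrightarrow> even b" using b by simp
      ultimately show ?thesis using sign idx by simp
    qed
  qed auto
  have "odd S" unfolding S_def by presburger
  from alternating_convolution_odd[OF this, of q "int N"] show ?thesis
    using N unfolding reindex[symmetric] sum_distrib_left[symmetric] by simp
qed

text \<open>The matrix with first row \<open>w\<close>, constant diagonal \<open>c\<close> below it and ones on the
  subdiagonal; it turns the Hurwitz block of \<open>q\<close> into that of \<open>(s + c) q\<close>.\<close>
definition bidiag_mat :: "(nat \<Rightarrow> 'a::comm_ring_1) \<Rightarrow> 'a \<Rightarrow> nat \<Rightarrow> 'a mat" where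
  "bidiag_mat w c N = mat N N (\<lambda>(i,j). if i = 0 then w j else if j + 1 = i then 1
                                         else if j = i then c else 0)"

lemma det_bidiag_mat:
  assumes "N \<ge> 1"
  shows "det (bidiag_mat w c N) = (\<Sum>k<N. (-1)^k * w k * c^(N-1-k))"
  using assms
proof (induction N rule: nat_induct_at_least)
  case base
  have "bidiag_mat w c 1 = mat 1 1 (\<lambda>_. w 0)" unfolding bidiag_mat_def by (rule eq_matI) auto
  then show ?case by (simp add: det_def' [of _ 1])
next
  case (Suc N)
  let ?C = "bidiag_mat w c (Suc N)"
  have C: "?C \<in> carrier_mat (Suc N) (Suc N)" unfolding bidiag_mat_def by auto
  have minor_last: "mat_delete ?C N N = bidiag_mat w c N"
    unfolding bidiag_mat_def mat_delete_def by (rule eq_matI) auto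
  have minor_first: "det (mat_delete ?C 0 N) = 1"
  proof -
    let ?D = "mat_delete ?C 0 N"
    have D: "?D \<in> carrier_mat N N" using mat_delete_carrier[OF C] by simp
    have "upper_triangular ?D"
      unfolding upper_triangular_def mat_delete_def bidiag_mat_def by auto
    then have "det ?D = prod_list (diag_mat ?D)" using D by (rule det_upper_triangular)
    also have "\<dots> = 1" unfolding prod_list_diag_prod using D
      by (auto simp: mat_delete_def bidiag_mat_def intro!: prod.neutral)
    finally show ?thesis .
  qed
  text \<open>Expand along the last column, which has entries only in rows \<open>0\<close> and \<open>N\<close>.\<close>
  have "det ?C = (\<Sum>i<Suc N. ?C $$ (i,N) * cofactor ?C i N)"
    by (rule laplace_expansion_column[OF C]) auto
  also have "\<dots> = (\<Sum>i\<in>{0,N}. ?C $$ (i,N) * cofactor ?C i N)"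
    by (rule sum.mono_neutral_right) (use Suc in \<open>auto simp: bidiag_mat_def\<close>)
  also have "\<dots> = w N * (-1)^N + c * det (bidiag_mat w c N)"
  proof -
    have "?C $$ (0,N) = w N" "?C $$ (N,N) = c" using Suc by (auto simp: bidiag_mat_def)
    then show ?thesis using Suc by (simp add: cofactor_def minor_last minor_first)
  qed
  also have "\<dots> = (\<Sum>k<Suc N. (-1)^k * w k * c^(Suc N-1-k))"
  proof -
    have "c * (\<Sum>k<N. (-1)^k * w k * c^(N-1-k)) = (\<Sum>k<N. (-1)^k * w k * c^(N-k))"
      unfolding sum_distrib_left
    proof (rule sum.cong[OF refl])
      fix k assume "k \<in> {..<N}"
      then have "c * c^(N-1-k) = c^(N-k)" by (simp add: Suc_diff_Suc[symmetric] del: Suc_diff_Suc)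
      then show "c * ((-1)^k * w k * c^(N-1-k)) = (-1)^k * w k * c^(N-k)"
        by (metis mult.left_commute)
    qed
    then show ?thesis unfolding Suc.IH by (simp add: algebra_simps)
  qed
  finally show ?case .
qed

definition factor_row :: "'a::comm_ring_1 poly \<Rightarrow> 'a \<Rightarrow> nat \<Rightarrow> 'a" where
  "factor_row q c j = (if j = 0 then c else 0) + (-1)^j * coeff q (degree q - Suc j)"

lemma det_factor_bidiag:
  assumes N: "degree q = N" "N \<ge> 1" and mon: "coeff q N = 1"
  shows "det (bidiag_mat (factor_row q c) c N) = poly q c"
proof -
  have "det (bidiag_mat (factor_row q c) c N)
      = (\<Sum>k<N. (if k = 0 then c^N else 0) + coeff q (N - 1 - k) * c^(N-1-k))"
    unfolding det_bidiag_mat[OF N(2)]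
  proof (rule sum.cong[OF refl])
    fix k assume "k \<in> {..<N}"
    then show "(-1)^k * factor_row q c k * c^(N-1-k)
        = (if k = 0 then c^N else 0) + coeff q (N - 1 - k) * c^(N-1-k)"
      using N by (cases N) (auto simp: factor_row_def algebra_simps)
  qed
  also have "\<dots> = c^N + (\<Sum>k<N. coeff q k * c^k)"
    using N(2) sum.nat_diff_reindex[of "\<lambda>k. coeff q k * c^k" N] by (simp add: sum.distrib)
  also have "\<dots> = poly q c"
    unfolding poly_altdef N(1) using mon by (simp add: lessThan_Suc_atMost[symmetric])
  finally show ?thesis .
qed

text \<open>Multiplying by the linear factor \<open>s + c\<close> acts on Hurwitz blocks by left
  multiplication; this uses the row relation to rewrite the first row.\<close>
lemma hurwitz_block_linear_factor:
  fixes q :: "'a::field_char_0 poly"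
  assumes N: "degree q = N" "N \<ge> 1" and mon: "coeff q N = 1"
  shows "hurwitz_block ([:c,1:] * q) (Suc N) N
       = bidiag_mat (factor_row q c) c N * hurwitz_block q (Suc N) N"
    (is "?H = ?C * ?R")
proof -
  define r where "r i j = hcoeff q (int N - 1 + int i - 2 * int j)" for i j :: nat
  have C: "?C \<in> carrier_mat N N" and R: "?R \<in> carrier_mat N N"
    unfolding bidiag_mat_def hurwitz_block_def by auto
  have R_entry: "?R $$ (k,j) = r (Suc k) j" if "k < N" "j < N" for k j
    using that unfolding hurwitz_block_def r_def by (simp add: algebra_simps)
  have first_row: "(\<Sum>k<N. factor_row q c k * r (Suc k) j) = c * r 1 j + r 0 j" for j
  proof -
    have rel: "(\<Sum>i<Suc N. (-1)^i * coeff q (N - i) * r i j) = 0"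
      unfolding r_def by (rule hurwitz_row_relation[OF N(1)])
    have "(\<Sum>k<N. factor_row q c k * r (Suc k) j)
        = (\<Sum>k<N. (if k = 0 then c * r 1 j else 0)) - (\<Sum>k<N. (-1)^Suc k * coeff q (N - Suc k) * r (Suc k) j)"
      unfolding sum_subtractf[symmetric] factor_row_def N(1) by (intro sum.cong) (auto simp: algebra_simps)
    also have "\<dots> = c * r 1 j + r 0 j"
      using rel N(2) mon unfolding sum.lessThan_Suc_shift
      by (simp add: sum_negf eq_neg_iff_add_eq_0 add.commute)
    finally show ?thesis .
  qed
  show ?thesis
  proof (rule eq_matI)
    fix i j assume "i < dim_row (?C * ?R)" "j < dim_col (?C * ?R)"
    then have i: "i < N" and j: "j < N" using C R by auto
    have "?H $$ (i,j) = r i j + c * r (Suc i) j"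
      using i j unfolding hurwitz_block_def r_def hcoeff_linear_factor by (simp add: algebra_simps)
    moreover have "(?C * ?R) $$ (i,j) = (\<Sum>k<N. ?C $$ (i,k) * r (Suc k) j)"
      using i j C R R_entry by (auto simp: scalar_prod_def lessThan_atLeast0 intro!: sum.cong)
    moreover have "(\<Sum>k<N. ?C $$ (i,k) * r (Suc k) j) = r i j + c * r (Suc i) j"
    proof (cases "i = 0")
      case True then show ?thesis using first_row[of j] unfolding bidiag_mat_def by (simp add: add.commute)
    next
      case False
      have "(\<Sum>k<N. ?C $$ (i,k) * r (Suc k) j)
          = (\<Sum>k<N. (if k = i - 1 then r i j else 0) + (if k = i then c * r (Suc i) j else 0))"
        unfolding bidiag_mat_def using False i by (intro sum.cong) auto
      then show ?thesis using False i by (simp add: sum.distrib)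
    qed
    ultimately show "?H $$ (i,j) = (?C * ?R) $$ (i,j)" by simp
  qed (use C R in \<open>auto simp: hurwitz_block_def\<close>)
qed

text \<open>The block of \<open>q\<close> with shifted index pattern has first column \<open>(1, 0, \<dots>, 0)\<close>, so
  its determinant is the Hurwitz determinant of \<open>q\<close> of one order less.\<close>
lemma det_shifted_hurwitz_block:
  assumes N: "degree q = N" "N \<ge> 1" and mon: "coeff q N = 1"
  shows "det (hurwitz_block q (Suc N) N) = hurwitz_det q N (N - 1)"
proof -
  let ?R = "hurwitz_block q (Suc N) N"
  have R: "?R \<in> carrier_mat N N" unfolding hurwitz_block_def by simp
  have "det ?R = (\<Sum>i<N. ?R $$ (i,0) * cofactor ?R i 0)"
    by (rule laplace_expansion_column[OF R]) (use N in auto)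
  also have "\<dots> = (\<Sum>i<N. if i = 0 then cofactor ?R 0 0 else 0)"
  proof (rule sum.cong[OF refl])
    fix i assume "i \<in> {..<N}"
    then have "?R $$ (i,0) = (if i = 0 then 1 else 0)"
      unfolding hurwitz_block_def hcoeff_def using mon N by (auto intro!: coeff_eq_0)
    then show "?R $$ (i,0) * cofactor ?R i 0 = (if i = 0 then cofactor ?R 0 0 else 0)" by simp
  qed
  also have "\<dots> = cofactor ?R 0 0" using N by simp
  also have "mat_delete ?R 0 0 = hurwitz_block q N (N - 1)"
    unfolding mat_delete_def hurwitz_block_def by (rule eq_matI) (auto simp: algebra_simps)
  then have "cofactor ?R 0 0 = hurwitz_det q N (N - 1)" unfolding cofactor_def hurwitz_det_def by simp
  finally show ?thesis .
qed

lemma hurwitz_det_linear_factor: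
  fixes q :: "'a::field_char_0 poly"
  assumes N: "degree q = N" "N \<ge> 1" and mon: "coeff q N = 1"
  shows "hurwitz_det ([:c,1:] * q) (Suc N) N = hurwitz_det q N (N - 1) * poly q c"
proof -
  have "hurwitz_det ([:c,1:] * q) (Suc N) N
      = det (bidiag_mat (factor_row q c) c N) * det (hurwitz_block q (Suc N) N)"
    unfolding hurwitz_det_def hurwitz_block_linear_factor[OF assms]
    by (rule det_mult) (auto simp: bidiag_mat_def hurwitz_block_def)
  then show ?thesis
    unfolding det_factor_bidiag[OF assms] det_shifted_hurwitz_block[OF assms] by simp
qed

section \<open>Stable polynomials and their Hurwitz determinants\<close>

interpretation complex_poly: map_poly_inj_idom_hom complex_of_real ..

abbreviation cpoly :: "real poly \<Rightarrow> complex poly" where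
  "cpoly p \<equiv> map_poly complex_of_real p"

definition stable_poly :: "real poly \<Rightarrow> bool" where
  "stable_poly p \<longleftrightarrow> (\<forall>z. poly (cpoly p) z = 0 \<longrightarrow> Re z < 0)"

lemma eigenvalue_iff_root_char_poly:
  assumes "B \<in> carrier_mat n n"
  shows "eigenvalue (map_mat complex_of_real B) z \<longleftrightarrow> poly (cpoly (char_poly B)) z = 0"
proof -
  have B: "map_mat complex_of_real B \<in> carrier_mat n n" using assms by simp
  show ?thesis unfolding eigenvalue_root_char_poly[OF B] of_real_hom.char_poly_hom[OF assms] ..
qed

lemma hurwitz_stable_iff_stable_char_poly:
  "B \<in> carrier_mat n n \<Longrightarrow> hurwitz_stable B \<longleftrightarrow> stable_poly (char_poly B)"
  unfolding hurwitz_stable_def stable_poly_def eigenvalue_iff_root_char_poly by simp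

lemma stable_poly_dvd: "stable_poly p \<Longrightarrow> q dvd p \<Longrightarrow> stable_poly q"
  unfolding stable_poly_def by (auto simp: complex_poly.hom_mult elim!: dvdE)

lemma hurwitz_det_cpoly: "hurwitz_det (cpoly p) d k = complex_of_real (hurwitz_det p d k)"
proof -
  have "hurwitz_block (cpoly p) d k = map_mat complex_of_real (hurwitz_block p d k)"
    unfolding hurwitz_block_def hcoeff_def by (rule eq_matI) auto
  then show ?thesis unfolding hurwitz_det_def by simp
qed

lemma poly_cpoly_cnj: "poly (cpoly p) (cnj z) = cnj (poly (cpoly p) z)"
  by (rule poly_cnj_real[symmetric]) (auto simp: Reals_def)

text \<open>A monic stable polynomial of positive degree is positive on \<open>[0, \<infinity>)\<close>: it has no real
  root there and tends to \<open>+\<infinity>\<close>.\<close>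
lemma stable_poly_pos:
  assumes st: "stable_poly p" and mon: "lead_coeff p = 1" and d: "degree p \<ge> 1" and x: "x \<ge> 0"
  shows "poly p x > 0"
proof (rule ccontr)
  assume "\<not> poly p x > 0"
  obtain N0 where N0: "\<forall>y\<ge>N0. lead_coeff p \<le> poly p y"
    using poly_pinfty_gt_lc[of p] mon d by auto
  define b where "b = max x N0"
  have "poly p b \<ge> 1" "x \<le> b" using N0 mon unfolding b_def by auto
  then obtain r where r: "x \<le> r" "poly p r = 0"
    using IVT[of "poly p" x 0 b] \<open>\<not> poly p x > 0\<close> by force
  then have "poly (cpoly p) (complex_of_real r) = 0" by simp
  then have "Re (complex_of_real r) < 0" using st unfolding stable_poly_def by blast
  then show False using r(1) x by simp
qed

text \<open>The real quadratic factor belonging to a pair of conjugate complex roots \<open>l, l\<^sup>*\<close>.\<close>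
definition conj_pair_poly :: "complex \<Rightarrow> real poly" where
  "conj_pair_poly l = [:(cmod l)^2, -2 * Re l, 1:]"

lemma cpoly_conj_pair_poly: "cpoly (conj_pair_poly l) = [:-l,1:] * [:-cnj l, 1:]"
proof -
  have "l * cnj l = complex_of_real ((cmod l)^2)" by (simp add: complex_mult_cnj cmod_def)
  moreover have "- l - cnj l = complex_of_real (-2 * Re l)"
    using complex_add_cnj[of l] by (simp add: algebra_simps minus_add_distrib[symmetric])
  ultimately show ?thesis unfolding conj_pair_poly_def by (simp add: algebra_simps)
qed

text \<open>A non-real root of a real polynomial brings its conjugate along, hence a quadratic
  real factor.\<close>
lemma conj_pair_poly_dvd:
  assumes root: "poly (cpoly p) l = 0" and nonreal: "Im l \<noteq> 0"
  shows "conj_pair_poly l dvd p"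
proof -
  obtain r where r: "cpoly p = [:-l,1:] * r" using root poly_eq_0_iff_dvd by (metis dvdE)
  have "poly (cpoly p) (cnj l) = 0" using root by (simp add: poly_cpoly_cnj)
  moreover have "poly ([:-l,1:] * r) (cnj l) = (cnj l - l) * poly r (cnj l)"
    by (simp add: algebra_simps)
  ultimately have "(cnj l - l) * poly r (cnj l) = 0" unfolding r by metis
  moreover have "cnj l - l \<noteq> 0" using nonreal by (simp add: complex_eq_iff)
  ultimately have "poly r (cnj l) = 0" by (metis mult_eq_0_iff)
  then obtain s where "r = [:-cnj l,1:] * s" using poly_eq_0_iff_dvd by (metis dvdE)
  then have "cpoly p = cpoly (conj_pair_poly l) * s"
    unfolding r cpoly_conj_pair_poly by (simp only: mult.assoc)
  then have "cpoly (conj_pair_poly l) dvd cpoly p" ..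
  then show ?thesis by (rule of_real_hom.dvd_map_poly_hom_imp_dvd)
qed

text \<open>Splitting off a conjugate pair: apply the linear factorization twice over \<open>\<complex>\<close>.\<close>
lemma hurwitz_det_conj_pair_factor:
  assumes dq: "degree q = N" and mon: "lead_coeff q = 1"
  shows "hurwitz_det (conj_pair_poly l * q) (N + 2) (N + 1)
       = hurwitz_det q N (N - 1) * (cmod (poly (cpoly q) (- l)))^2 * (-2 * Re l)"
proof -
  define w where "w = poly (cpoly q) (- l)"
  define q1 where "q1 = [:- cnj l, 1:] * cpoly q"
  have cq: "cpoly q \<noteq> 0" "degree (cpoly q) = N" "coeff (cpoly q) N = 1"
    using mon dq by auto
  have "degree q1 = degree [:- cnj l, 1:] + degree (cpoly q)"
    unfolding q1_def by (rule degree_mult_eq) (use cq in auto)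
  then have dq1: "degree q1 = Suc N" using cq by simp
  have "lead_coeff q1 = 1" unfolding q1_def lead_coeff_mult using mon by simp
  then have mq1: "coeff q1 (Suc N) = 1" using dq1 by simp
  have outer: "hurwitz_det (cpoly (conj_pair_poly l * q)) (N + 2) (N + 1)
      = hurwitz_det q1 (Suc N) N * poly q1 (- l)"
  proof -
    have "cpoly (conj_pair_poly l * q) = [:- l, 1:] * q1"
      unfolding q1_def complex_poly.hom_mult cpoly_conj_pair_poly by (simp only: mult.assoc)
    then show ?thesis using hurwitz_det_linear_factor[OF dq1 _ mq1, of "- l"] by simp
  qed
  have inner: "hurwitz_det q1 (Suc N) N = complex_of_real (hurwitz_det q N (N - 1)) * cnj w"
  proof (cases "N = 0")
    case True
    then have "q = 1" using dq mon by (metis coeff_0_degree_minus_1 degree_0_id one_pCons lead_coeff_1)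
    then show ?thesis using True unfolding w_def by simp
  next
    case False
    have "poly (cpoly q) (- cnj l) = cnj w"
      using poly_cpoly_cnj[of q "- l"] unfolding w_def by simp
    then show ?thesis
      using hurwitz_det_linear_factor[OF cq(2) _ cq(3), of "- cnj l"] False
      unfolding q1_def hurwitz_det_cpoly by simp
  qed
  have "poly q1 (- l) = complex_of_real (-2 * Re l) * w"
    unfolding q1_def w_def by (simp add: complex_eq_iff)
  then have "hurwitz_det (cpoly (conj_pair_poly l * q)) (N + 2) (N + 1)
      = complex_of_real (hurwitz_det q N (N - 1) * (-2 * Re l)) * (w * cnj w)"
    unfolding outer inner by (simp add: algebra_simps)
  also have "w * cnj w = complex_of_real ((cmod w)^2)" by (rule complex_norm_square[symmetric])
  finally show ?thesis unfolding hurwitz_det_cpoly w_def of_real_mult[symmetric] of_real_eq_iff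
    by (simp add: algebra_simps)
qed

lemma stable_monic_cofactor:
  assumes pq: "p = a * q" and mon: "lead_coeff p = 1" "lead_coeff a = 1" and st: "stable_poly p"
  shows "degree q = degree p - degree a" and "lead_coeff q = 1" and "stable_poly q"
proof -
  have "a \<noteq> 0" "q \<noteq> 0" using mon pq by auto
  then show "degree q = degree p - degree a" unfolding pq by (simp add: degree_mult_eq)
  show "lead_coeff q = 1" using mon unfolding pq lead_coeff_mult by simp
  show "stable_poly q" using st by (rule stable_poly_dvd) (use pq in \<open>simp only: dvd_triv_right\<close>)
qed

text \<open>Induction on the degree, splitting off a real root or a pair of
  conjugate roots; each factorization contributes a positive factor.\<close>
lemma hurwitz_det_pos_if_stable:
  "degree p = n \<Longrightarrow> lead_coeff p = 1 \<Longrightarrow> stable_poly p \<Longrightarrow> hurwitz_det p n (n - 1) > 0"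
proof (induction n arbitrary: p rule: less_induct)
  case (less n p)
  note deg = less.prems(1) and mon = less.prems(2) and st = less.prems(3)
  show ?case
  proof (cases "n \<le> 1")
    case True then show ?thesis by simp
  next
    case False
    obtain l where root: "poly (cpoly p) l = 0"
      using fundamental_theorem_of_algebra[of "cpoly p"] constant_degree[of "cpoly p"] deg False
      by auto
    have Rel: "Re l < 0" using st root unfolding stable_poly_def by blast
    show ?thesis
    proof (cases "Im l = 0")
      case True
      define r where "r = Re l"
      have "l = complex_of_real r" unfolding r_def using True by (simp add: complex_eq_iff)
      then have "complex_of_real (poly p r) = 0" using root by simp
      then have "poly p r = 0" by simp
      then obtain q where pq: "p = [:-r,1:] * q" using poly_eq_0_iff_dvd by (metis dvdE)
      from stable_monic_cofactor[OF pq mon _ st] deg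
      have dq: "degree q = n - 1" and mq: "lead_coeff q = 1" and sq: "stable_poly q" by auto
      have "hurwitz_det p n (n - 1) = hurwitz_det q (n - 1) (n - 1 - 1) * poly q (- r)"
        using hurwitz_det_linear_factor[OF dq _, of "- r"] mq dq False pq
        by (simp add: Suc_diff_le)
      moreover have "hurwitz_det q (n - 1) (n - 1 - 1) > 0"
        using less.IH[OF _ dq mq sq] False by simp
      moreover have "poly q (- r) > 0"
        using stable_poly_pos[OF sq mq] dq False Rel unfolding r_def by simp
      ultimately show ?thesis by simp
    next
      case False
      obtain q where pq: "p = conj_pair_poly l * q"
        using conj_pair_poly_dvd[OF root False] by (metis dvdE)
      from stable_monic_cofactor[OF pq mon _ st] deg
      have dq: "degree q = n - 2" and mq: "lead_coeff q = 1" and sq: "stable_poly q"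
        by (auto simp: conj_pair_poly_def)
      have "hurwitz_det p n (n - 1)
          = hurwitz_det q (n - 2) (n - 2 - 1) * (cmod (poly (cpoly q) (- l)))^2 * (-2 * Re l)"
      proof -
        have "n - 2 + 2 = n" "n - 2 + 1 = n - 1" using \<open>\<not> n \<le> 1\<close> by auto
        then show ?thesis using hurwitz_det_conj_pair_factor[OF dq mq, of l] unfolding pq by simp
      qed
      moreover have "hurwitz_det q (n - 2) (n - 2 - 1) > 0"
        using less.IH[OF _ dq mq sq] \<open>\<not> n \<le> 1\<close> by simp
      moreover have "poly (cpoly q) (- l) \<noteq> 0"
        using sq Rel unfolding stable_poly_def by fastforce
      then have "(cmod (poly (cpoly q) (- l)))^2 > 0" by simp
      ultimately show ?thesis using Rel by (simp add: mult_pos_neg mult_neg_pos)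
    qed
  qed
qed

text \<open>Conversely, a monic real polynomial with \<open>p(0) \<noteq> 0\<close> and nonzero top Hurwitz
  determinant has no roots on the imaginary axis: a root \<open>i\<omega>\<close> with \<open>\<omega> \<noteq> 0\<close> comes with
  \<open>-i\<omega>\<close>, and splitting off \<open>s - i\<omega>\<close> makes the determinant vanish.\<close>
lemma no_imaginary_root:
  assumes deg: "degree p = n" and n2: "n \<ge> 2" and mon: "lead_coeff p = 1"
    and p0: "poly p 0 \<noteq> 0" and hd: "hurwitz_det p n (n - 1) \<noteq> 0"
    and root: "poly (cpoly p) z = 0"
  shows "Re z \<noteq> 0"
proof
  assume re: "Re z = 0"
  have "poly (cpoly p) (complex_of_real 0) \<noteq> 0" using p0 by simp
  then have "z \<noteq> 0" using root by auto
  obtain q where pq: "cpoly p = [:-z,1:] * q" using root poly_eq_0_iff_dvd by (metis dvdE)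
  have "cnj z = - z" using re by (simp add: complex_eq_iff)
  then have "poly (cpoly p) (- z) = 0" using root poly_cpoly_cnj[of p z] by simp
  then have qz: "poly q (- z) = 0" using \<open>z \<noteq> 0\<close> unfolding pq by simp
  have q0: "q \<noteq> 0" using pq mon by auto
  have "degree (cpoly p) = 1 + degree q" unfolding pq using q0 by (subst degree_mult_eq) auto
  then have dq: "degree q = n - 1" using deg by simp
  have "lead_coeff (cpoly p) = 1" using mon by simp
  then have "lead_coeff q = 1" unfolding pq lead_coeff_mult by simp
  then have "hurwitz_det (cpoly p) n (n - 1) = 0"
    using hurwitz_det_linear_factor[OF dq _, of "- z"] dq n2 qz unfolding pq
    by (simp add: Suc_diff_le)
  then show False using hd unfolding hurwitz_det_cpoly by simp
qed

section \<open>Eigenvalues of continuously varying matrices\<close>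

text \<open>The characteristic polynomial of a real matrix as a function of its entries and of the
  complex variable; it is jointly continuous, being a polynomial in both.\<close>
definition char_det :: "nat \<Rightarrow> (nat \<Rightarrow> nat \<Rightarrow> real) \<Rightarrow> complex \<Rightarrow> complex" where
  "char_det n e z = det (mat n n (\<lambda>(i,j). (if i = j then z else 0) - complex_of_real (e i j)))"

lemma poly_char_poly_char_det:
  assumes B: "B \<in> carrier_mat n n"
  shows "poly (char_poly (map_mat complex_of_real B)) z = char_det n (\<lambda>i j. B $$ (i,j)) z"
proof -
  have "map_mat complex_of_real B \<in> carrier_mat n n" using B by simp
  then show ?thesis unfolding char_poly_def char_det_def
    by (intro poly_det_cong[of _ n]) (use B in \<open>auto simp: char_poly_matrix_def\<close>)
qed

lemma eigenvalue_iff_char_det: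
  assumes B: "B \<in> carrier_mat n n"
  shows "eigenvalue (map_mat complex_of_real B) z \<longleftrightarrow> char_det n (\<lambda>i j. B $$ (i,j)) z = 0"
proof -
  have B': "map_mat complex_of_real B \<in> carrier_mat n n" using B by simp
  show ?thesis unfolding eigenvalue_root_char_poly[OF B'] poly_char_poly_char_det[OF B] ..
qed

lemma tendsto_char_det:
  assumes e: "\<And>i j. i < n \<Longrightarrow> j < n \<Longrightarrow> (\<lambda>k. e k i j) \<longlonglongrightarrow> e0 i j"
    and z: "zk \<longlonglongrightarrow> z"
  shows "(\<lambda>k. char_det n (e k) (zk k)) \<longlonglongrightarrow> char_det n e0 z"
proof -
  have c: "\<And>e z. mat n n (\<lambda>(i,j). (if i = j then z else 0) - complex_of_real (e i j)) \<in> carrier_mat n n"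
    by simp
  show ?thesis unfolding char_det_def det_def'[OF c]
  proof (intro tendsto_sum tendsto_mult tendsto_const tendsto_prod)
    fix p i assume "p \<in> {p. p permutes {0..<n}}" and i: "i \<in> {0..<n}"
    then have "p i < n" using permutes_in_image by fastforce
    then show "(\<lambda>k. mat n n (\<lambda>(i,j). (if i = j then zk k else 0) - complex_of_real (e k i j)) $$ (i, p i))
        \<longlonglongrightarrow> mat n n (\<lambda>(i,j). (if i = j then z else 0) - complex_of_real (e0 i j)) $$ (i, p i)"
      using i by (auto intro!: tendsto_intros e z)
  qed
qed

lemma eigenvalue_norm_bound:
  assumes A: "(A :: complex mat) \<in> carrier_mat n n" and ev: "eigenvalue A z"
  shows "cmod z \<le> (\<Sum>i<n. \<Sum>j<n. cmod (A $$ (i,j)))"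
proof -
  obtain v where v: "v \<in> carrier_vec n" "v \<noteq> 0\<^sub>v n" "A *\<^sub>v v = z \<cdot>\<^sub>v v"
    using ev A unfolding eigenvalue_def eigenvector_def by auto
  have "n > 0" using v by (metis carrier_vecD eq_vecI gr0I index_zero_vec(2) less_nat_zero_code)
  define M where "M = Max ((\<lambda>i. cmod (v $ i)) ` {..<n})"
  have "M \<in> (\<lambda>i. cmod (v $ i)) ` {..<n}" unfolding M_def by (rule Max_in) (use \<open>n > 0\<close> in auto)
  then obtain i0 where i0: "i0 < n" "cmod (v $ i0) = M" by auto
  have le: "cmod (v $ j) \<le> M" if "j < n" for j unfolding M_def using that by auto
  have M0: "M > 0"
  proof (rule ccontr)
    assume "\<not> M > 0"
    then have "\<forall>j<n. v $ j = 0" using le by (meson norm_le_zero_iff not_le order_trans)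
    then have "v = 0\<^sub>v n" using v(1) by (intro eq_vecI) auto
    then show False using v(2) by simp
  qed
  have "(A *\<^sub>v v) $ i0 = (z \<cdot>\<^sub>v v) $ i0" using v(3) by simp
  then have "z * v $ i0 = (\<Sum>j<n. A $$ (i0,j) * v $ j)"
    using A v(1) i0 by (simp add: scalar_prod_def lessThan_atLeast0 mult.commute)
  then have "cmod z * M = cmod (\<Sum>j<n. A $$ (i0,j) * v $ j)" using i0 by (metis norm_mult)
  also have "\<dots> \<le> (\<Sum>j<n. cmod (A $$ (i0,j)) * cmod (v $ j))"
    by (rule order_trans[OF norm_sum]) (simp add: norm_mult)
  also have "\<dots> \<le> (\<Sum>j<n. cmod (A $$ (i0,j))) * M"
    unfolding sum_distrib_right by (rule sum_mono) (simp add: le mult_left_mono)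
  also have "\<dots> \<le> (\<Sum>i<n. \<Sum>j<n. cmod (A $$ (i,j))) * M"
    using M0 i0(1) by (intro mult_right_mono member_le_sum) (auto intro: sum_nonneg)
  finally show ?thesis using M0 by simp
qed

lemma complex_convergent_subseq:
  fixes Z :: "nat \<Rightarrow> complex"
  assumes B: "\<And>k. cmod (Z k) \<le> K"
  shows "\<exists>r L. strict_mono r \<and> (Z \<circ> r) \<longlonglongrightarrow> L"
proof -
  have real_bw: "\<exists>r L. strict_mono r \<and> (X \<circ> r) \<longlonglongrightarrow> L" if "Bseq X" for X :: "nat \<Rightarrow> real"
  proof -
    obtain r where r: "strict_mono r" "monoseq (\<lambda>n. X (r n))" using seq_monosub by blast
    have "Bseq (\<lambda>n. X (r n))" using that by (metis Bseq_def)
    then have "convergent (\<lambda>n. X (r n))" using r(2) Bseq_monoseq_convergent by blast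
    then show ?thesis using r(1) by (auto simp: convergent_def comp_def)
  qed
  have "Bseq (\<lambda>k. Re (Z k))" using B abs_Re_le_cmod
    by (intro BseqI'[of _ K]) (auto intro: order_trans)
  then obtain r1 L1 where r1: "strict_mono r1" "((\<lambda>k. Re (Z k)) \<circ> r1) \<longlonglongrightarrow> L1"
    using real_bw by blast
  have "Bseq (\<lambda>k. Im (Z (r1 k)))" using B abs_Im_le_cmod
    by (intro BseqI'[of _ K]) (auto intro: order_trans)
  then obtain r2 L2 where r2: "strict_mono r2" "((\<lambda>k. Im (Z (r1 k))) \<circ> r2) \<longlonglongrightarrow> L2"
    using real_bw by blast
  have "((\<lambda>k. Re (Z k)) \<circ> r1 \<circ> r2) \<longlonglongrightarrow> L1" using LIMSEQ_subseq_LIMSEQ[OF r1(2) r2(1)] .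
  with r2(2) have "(Z \<circ> (r1 \<circ> r2)) \<longlonglongrightarrow> Complex L1 L2"
    unfolding tendsto_complex_iff by (simp add: comp_def)
  then show ?thesis using strict_mono_o[OF r1(1) r2(1)] by blast
qed

text \<open>Closedness of instability: a limit of matrices each having an eigenvalue in the closed
  right half-plane has such an eigenvalue too (eigenvalues stay bounded, a subsequence
  converges, and the limit is a root of the limiting characteristic polynomial).\<close>
lemma unstable_limit:
  assumes carr: "\<And>k. B k \<in> carrier_mat n n" "B0 \<in> carrier_mat n n"
    and lim: "\<And>i j. i < n \<Longrightarrow> j < n \<Longrightarrow> (\<lambda>k. B k $$ (i,j)) \<longlonglongrightarrow> B0 $$ (i,j)"
    and ev: "\<And>k. eigenvalue (map_mat complex_of_real (B k)) (zk k)" "\<And>k. Re (zk k) \<ge> 0"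
  shows "\<exists>z. eigenvalue (map_mat complex_of_real B0) z \<and> Re z \<ge> 0"
proof -
  define b where "b k = (\<Sum>i<n. \<Sum>j<n. cmod (complex_of_real (B k $$ (i,j))))" for k
  have "b \<longlonglongrightarrow> (\<Sum>i<n. \<Sum>j<n. cmod (complex_of_real (B0 $$ (i,j))))"
    unfolding b_def by (intro tendsto_sum tendsto_norm tendsto_of_real lim) auto
  then have "Bseq b" using convergent_imp_Bseq convergentI by blast
  then obtain K where K: "\<And>k. norm (b k) \<le> K" using BseqE by metis
  have "cmod (zk k) \<le> K" for k
  proof -
    have "cmod (zk k) \<le> (\<Sum>i<n. \<Sum>j<n. cmod (map_mat complex_of_real (B k) $$ (i,j)))"
      by (rule eigenvalue_norm_bound[OF _ ev(1)]) (use carr in auto)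
    also have "\<dots> = b k" unfolding b_def using carr(1)[of k] by (intro sum.cong refl) auto
    finally show ?thesis using K[of k] by simp
  qed
  then obtain r L where r: "strict_mono r" "(zk \<circ> r) \<longlonglongrightarrow> L"
    using complex_convergent_subseq by blast
  have "(\<lambda>k. char_det n (\<lambda>i j. B (r k) $$ (i,j)) ((zk \<circ> r) k)) \<longlonglongrightarrow> char_det n (\<lambda>i j. B0 $$ (i,j)) L"
  proof (rule tendsto_char_det[OF _ r(2)])
    fix i j assume "i < n" "j < n"
    from LIMSEQ_subseq_LIMSEQ[OF lim[OF this] r(1)]
    show "(\<lambda>k. B (r k) $$ (i,j)) \<longlonglongrightarrow> B0 $$ (i,j)" by (simp add: comp_def)
  qed
  moreover have "char_det n (\<lambda>i j. B (r k) $$ (i,j)) ((zk \<circ> r) k) = 0" for k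
    using eigenvalue_iff_char_det[OF carr(1)] ev(1) by simp
  ultimately have "char_det n (\<lambda>i j. B0 $$ (i,j)) L = 0" by (simp add: LIMSEQ_const_iff)
  moreover have "0 \<le> Re L"
    by (rule LIMSEQ_le_const[OF tendsto_Re[OF r(2)]]) (use ev(2) in auto)
  ultimately show ?thesis using eigenvalue_iff_char_det[OF carr(2)] by blast
qed

lemma norm_poly_linear_factors_bound:
  assumes "\<forall>a\<in>set as. Re a < 0" and z: "Re z > 0"
  shows "(Re z)^(length as) \<le> cmod (poly (\<Prod>a\<leftarrow>as. [:-a,1:]) z)"
  using assms(1)
proof (induction as)
  case (Cons a as)
  have "Re z \<le> Re (z - a)" using Cons.prems by simp
  also have "\<dots> \<le> cmod (z - a)" by (rule complex_Re_le_cmod)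
  finally have "Re z * (Re z)^(length as) \<le> cmod (z - a) * cmod (poly (\<Prod>a\<leftarrow>as. [:-a,1:]) z)"
    using Cons z by (intro mult_mono) auto
  moreover have "poly (\<Prod>a\<leftarrow>a # as. [:-a,1:]) z = (z - a) * poly (\<Prod>a\<leftarrow>as. [:-a,1:]) z"
    by (simp add: algebra_simps)
  ultimately show ?case by (simp only: norm_mult) simp
qed simp

text \<open>Closedness of (weak) stability: the characteristic polynomial of a stable matrix is
  at least \<open>(Re z)\<^sup>n\<close> in modulus at any \<open>z\<close> with \<open>Re z > 0\<close>, which survives in the limit.\<close>
lemma stable_limit:
  assumes carr: "\<And>k. B k \<in> carrier_mat n n" "B0 \<in> carrier_mat n n"
    and lim: "\<And>i j. i < n \<Longrightarrow> j < n \<Longrightarrow> (\<lambda>k. B k $$ (i,j)) \<longlonglongrightarrow> B0 $$ (i,j)"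
    and st: "\<And>k. hurwitz_stable (B k)"
    and ev: "eigenvalue (map_mat complex_of_real B0) z"
  shows "Re z \<le> 0"
proof (rule ccontr)
  assume "\<not> Re z \<le> 0"
  then have zp: "Re z > 0" by simp
  have bound: "(Re z)^n \<le> cmod (char_det n (\<lambda>i j. B k $$ (i,j)) z)" for k
  proof -
    let ?B = "map_mat complex_of_real (B k)"
    have Bk: "?B \<in> carrier_mat n n" using carr by simp
    obtain as where as: "char_poly ?B = (\<Prod>a\<leftarrow>as. [:-a,1:])" "length as = n"
      using char_poly_factorized[OF Bk] by blast
    have "\<forall>a\<in>set as. Re a < 0"
    proof
      fix a assume "a \<in> set as"
      then have "poly (char_poly ?B) a = 0" unfolding as(1) poly_prod_list
        by (simp add: prod_list_zero_iff)
      then show "Re a < 0" using st[of k] eigenvalue_root_char_poly[OF Bk]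
        unfolding hurwitz_stable_def by blast
    qed
    then have "(Re z)^n \<le> cmod (poly (char_poly ?B) z)"
      using norm_poly_linear_factors_bound[OF _ zp, of as] as by simp
    then show ?thesis unfolding poly_char_poly_char_det[OF carr(1)] .
  qed
  have "(\<lambda>k. char_det n (\<lambda>i j. B k $$ (i,j)) z) \<longlonglongrightarrow> char_det n (\<lambda>i j. B0 $$ (i,j)) z"
    by (rule tendsto_char_det[OF lim tendsto_const])
  moreover have "char_det n (\<lambda>i j. B0 $$ (i,j)) z = 0" using eigenvalue_iff_char_det[OF carr(2)] ev by simp
  ultimately have "(\<lambda>k. cmod (char_det n (\<lambda>i j. B k $$ (i,j)) z)) \<longlonglongrightarrow> 0"
    by (simp add: tendsto_norm_zero)
  moreover have "(Re z)^n > 0" using zp by simp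
  ultimately have "\<forall>\<^sub>F k in sequentially. cmod (char_det n (\<lambda>i j. B k $$ (i,j)) z) < (Re z)^n"
    by (rule order_tendstoD(2))
  then obtain k where "cmod (char_det n (\<lambda>i j. B k $$ (i,j)) z) < (Re z)^n"
    unfolding eventually_sequentially by blast
  then show False using bound[of k] by simp
qed

lemma seq_tendsto_Inf:
  fixes U :: "real set"
  assumes "U \<noteq> {}" "bdd_below U"
  shows "\<exists>u. (\<forall>k. u k \<in> U) \<and> u \<longlonglongrightarrow> Inf U"
proof -
  have "\<exists>x\<in>U. x < Inf U + inverse (real (Suc k))" for k
    using assms by (subst cInf_less_iff[symmetric]) auto
  then obtain u where u: "\<And>k. u k \<in> U" "\<And>k. u k < Inf U + inverse (real (Suc k))" by metis
  have "u \<longlonglongrightarrow> Inf U"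
  proof (rule tendsto_sandwich[of "\<lambda>_. Inf U" _ _ "\<lambda>k. Inf U + inverse (real (Suc k))"])
    show "\<forall>\<^sub>F k in sequentially. Inf U \<le> u k"
      using cInf_lower[OF u(1) assms(2)] by (auto intro: always_eventually)
    show "\<forall>\<^sub>F k in sequentially. u k \<le> Inf U + inverse (real (Suc k))"
      using u(2) by (auto intro!: always_eventually less_imp_le)
    show "(\<lambda>k. Inf U + inverse (real (Suc k))) \<longlonglongrightarrow> Inf U"
      using tendsto_add[OF tendsto_const LIMSEQ_inverse_real_of_nat, of "Inf U"] by simp
  qed simp
  then show ?thesis using u(1) by blast
qed

text \<open>Connectedness of \<open>[0, 1]\<close> in sequential form: a property holding at \<open>0\<close> whose
  truth set and falsity set are both sequentially closed in \<open>[0, 1]\<close> holds everywhere.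
  The infimum \<open>\<sigma>\<close> of the falsity set gives the contradiction: it is approached both by
  points where the property fails and (if \<open>\<sigma> > 0\<close>) by points below it where it holds.\<close>
lemma unit_interval_sequential_connected:
  fixes P :: "real \<Rightarrow> bool"
  assumes P0: "P 0"
    and true_closed: "\<And>s u. s \<in> {0..1} \<Longrightarrow> \<not> P s \<Longrightarrow> (\<And>k. u k \<in> {0..1}) \<Longrightarrow> (\<And>k. P (u k))
                         \<Longrightarrow> u \<longlonglongrightarrow> s \<Longrightarrow> False"
    and false_closed: "\<And>s u. s \<in> {0..1} \<Longrightarrow> P s \<Longrightarrow> (\<And>k. u k \<in> {0..1}) \<Longrightarrow> (\<And>k. \<not> P (u k))
                         \<Longrightarrow> u \<longlonglongrightarrow> s \<Longrightarrow> False"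
  shows "\<forall>s\<in>{0..1}. P s"
proof (rule ccontr)
  define U where "U = {s\<in>{0..1}. \<not> P s}"
  assume "\<not> (\<forall>s\<in>{0..1}. P s)"
  then have Une: "U \<noteq> {}" unfolding U_def by auto
  have bdd: "bdd_below U" unfolding U_def by (rule bdd_belowI[of _ 0]) auto
  define \<sigma> where "\<sigma> = Inf U"
  have lo: "\<sigma> \<le> s" if "s \<in> U" for s unfolding \<sigma>_def using that bdd by (rule cInf_lower)
  have s0: "0 \<le> \<sigma>" unfolding \<sigma>_def using Une by (rule cInf_greatest) (auto simp: U_def)
  have s1: "\<sigma> \<le> 1" using Une lo unfolding U_def by force
  show False
  proof (cases "P \<sigma>")
    case True
    obtain u where "\<And>k. u k \<in> U" "u \<longlonglongrightarrow> \<sigma>" using seq_tendsto_Inf[OF Une bdd] \<sigma>_def by blast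
    then show False using false_closed[of \<sigma> u] True s0 s1 unfolding U_def by auto
  next
    case False
    then have sp: "\<sigma> > 0" using P0 s0 by (cases "\<sigma> = 0") auto
    define u where "u k = \<sigma> - \<sigma> * inverse (real (Suc k))" for k
    have "0 < inverse (real (Suc k))" "inverse (real (Suc k)) \<le> 1" for k
      by (auto simp: inverse_le_1_iff)
    then have uin: "0 \<le> u k \<and> u k < \<sigma>" for k
      unfolding u_def using sp mult_left_le[of "inverse (real (Suc k))" \<sigma>] by auto
    have "P (u k)" for k using lo[of "u k"] uin[of k] s1 unfolding U_def by force
    moreover have "u \<longlonglongrightarrow> \<sigma>"
      using tendsto_diff[OF tendsto_const tendsto_mult[OF tendsto_const LIMSEQ_inverse_real_of_nat]]
      unfolding u_def by simp
    ultimately show False using true_closed[of \<sigma> u] False s0 s1 uin by fastforce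
  qed
qed

lemma hurwitz_stable_path:
  fixes E :: "real \<Rightarrow> real mat"
  assumes carr: "\<And>s. s \<in> {0..1} \<Longrightarrow> E s \<in> carrier_mat n n"
    and cont: "\<And>i j. i < n \<Longrightarrow> j < n \<Longrightarrow> continuous_on {0..1} (\<lambda>s. E s $$ (i,j))"
    and no_imag: "\<And>s z. s \<in> {0..1} \<Longrightarrow> eigenvalue (map_mat complex_of_real (E s)) z \<Longrightarrow> Re z \<noteq> 0"
    and st0: "hurwitz_stable (E 0)"
  shows "\<forall>s\<in>{0..1}. hurwitz_stable (E s)"
proof (rule unit_interval_sequential_connected[of "\<lambda>s. hurwitz_stable (E s)"])
  have entries: "(\<lambda>k. E (u k) $$ (i,j)) \<longlonglongrightarrow> E s $$ (i,j)"
    if "s \<in> {0..1}" "\<And>k. u k \<in> {0..1}" "u \<longlonglongrightarrow> s" "i < n" "j < n" for i j s u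
    by (rule continuous_on_tendsto_compose[OF cont[OF that(4,5)] that(3,1)]) (use that(2) in auto)
  show "hurwitz_stable (E 0)" by (rule st0)
  fix s u assume s: "s \<in> {0..1}" and u: "\<And>k. u k \<in> {0..(1::real)}" and lim: "u \<longlonglongrightarrow> s"
  note limit = carr[OF u] carr[OF s] entries[OF s u lim]
  {
    assume "\<not> hurwitz_stable (E s)" and "\<And>k. hurwitz_stable (E (u k))"
    then obtain z where z: "eigenvalue (map_mat complex_of_real (E s)) z" "\<not> Re z < 0"
      unfolding hurwitz_stable_def by blast
    then have "Re z > 0" using no_imag[OF s] by force
    moreover have "Re z \<le> 0"
      using stable_limit[of "\<lambda>k. E (u k)", OF limit] \<open>\<And>k. hurwitz_stable (E (u k))\<close> z(1) by blast
    ultimately show False by simp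
  next
    assume "hurwitz_stable (E s)" and "\<And>k. \<not> hurwitz_stable (E (u k))"
    then have "\<exists>z. eigenvalue (map_mat complex_of_real (E (u k))) z \<and> Re z \<ge> 0" for k
      unfolding hurwitz_stable_def by (meson not_less)
    then obtain zk where "\<And>k. eigenvalue (map_mat complex_of_real (E (u k))) (zk k)" "\<And>k. Re (zk k) \<ge> 0"
      by metis
    from unstable_limit[of "\<lambda>k. E (u k)", OF limit this] show False
      using \<open>hurwitz_stable (E s)\<close> unfolding hurwitz_stable_def by force
  }
qed

section \<open>Evaluation of multivariate polynomials\<close>

definition monomial_value :: "(nat \<Rightarrow> real) \<Rightarrow> (nat \<Rightarrow>\<^sub>0 nat) \<Rightarrow> real" where
  "monomial_value x mn = (\<Prod>i\<in>Poly_Mapping.keys mn. x i ^ Poly_Mapping.lookup mn i)"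

lemma mpoly_eval_monomials:
  "mpoly_eval p x = (\<Sum>mn\<in>Poly_Mapping.keys p. Poly_Mapping.lookup p mn * monomial_value x mn)"
  unfolding mpoly_eval_def monomial_value_def ..

lemma mpoly_eval_superset:
  assumes "finite S" "Poly_Mapping.keys p \<subseteq> S"
  shows "mpoly_eval p x = (\<Sum>mn\<in>S. Poly_Mapping.lookup p mn * monomial_value x mn)"
  unfolding mpoly_eval_monomials using assms
  by (intro sum.mono_neutral_left) (auto simp: in_keys_iff)

lemma monomial_value_superset:
  assumes "finite S" "Poly_Mapping.keys mn \<subseteq> S"
  shows "monomial_value x mn = (\<Prod>i\<in>S. x i ^ Poly_Mapping.lookup mn i)"
  unfolding monomial_value_def using assms
  by (intro prod.mono_neutral_left) (auto simp: in_keys_iff)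

lemma monomial_value_add: "monomial_value x (a + b) = monomial_value x a * monomial_value x b"
proof -
  let ?S = "Poly_Mapping.keys a \<union> Poly_Mapping.keys b"
  have f: "finite ?S" by simp
  have "monomial_value x (a + b) = (\<Prod>i\<in>?S. x i ^ Poly_Mapping.lookup (a + b) i)"
    by (rule monomial_value_superset[OF f keys_add])
  also have "\<dots> = (\<Prod>i\<in>?S. x i ^ Poly_Mapping.lookup a i * x i ^ Poly_Mapping.lookup b i)"
    by (simp add: lookup_add power_add)
  also have "\<dots> = monomial_value x a * monomial_value x b"
    unfolding prod.distrib by (subst (1 2) monomial_value_superset[OF f]) auto
  finally show ?thesis .
qed

lemma mpoly_eval_single: "mpoly_eval (Poly_Mapping.single k c) x = c * monomial_value x k"
  unfolding mpoly_eval_monomials by simp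

lemma mpoly_eval_add: "mpoly_eval (p + q) x = mpoly_eval p x + mpoly_eval q x"
proof -
  let ?S = "Poly_Mapping.keys p \<union> Poly_Mapping.keys q"
  have f: "finite ?S" by simp
  show ?thesis
    by (subst (1 2 3) mpoly_eval_superset[OF f])
       (auto simp: keys_add lookup_add algebra_simps sum.distrib)
qed

lemma mpoly_eval_sum: "mpoly_eval (\<Sum>i\<in>A. f i) x = (\<Sum>i\<in>A. mpoly_eval (f i) x)"
proof -
  have "mpoly_eval 0 x = 0" unfolding mpoly_eval_def by simp
  then show ?thesis by (induction A rule: infinite_finite_induct) (auto simp: mpoly_eval_add)
qed

lemma poly_mapping_sum_singles:
  "p = (\<Sum>k\<in>Poly_Mapping.keys p. Poly_Mapping.single k (Poly_Mapping.lookup p k))"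
proof (rule poly_mapping_eqI)
  fix k'
  show "Poly_Mapping.lookup p k'
      = Poly_Mapping.lookup (\<Sum>k\<in>Poly_Mapping.keys p. Poly_Mapping.single k (Poly_Mapping.lookup p k)) k'"
    unfolding lookup_sum lookup_single
    by (cases "k' \<in> Poly_Mapping.keys p") (auto simp: when_def in_keys_iff)
qed

lemma mpoly_eval_mult: "mpoly_eval (p * q) x = mpoly_eval p x * mpoly_eval q x"
proof -
  have "p * q = (\<Sum>a\<in>Poly_Mapping.keys p. Poly_Mapping.single a (Poly_Mapping.lookup p a)) *
                (\<Sum>b\<in>Poly_Mapping.keys q. Poly_Mapping.single b (Poly_Mapping.lookup q b))"
    by (subst (1) poly_mapping_sum_singles[of p], subst (1) poly_mapping_sum_singles[of q]) simp
  also have "\<dots> = (\<Sum>a\<in>Poly_Mapping.keys p. \<Sum>b\<in>Poly_Mapping.keys q.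
       Poly_Mapping.single (a + b) (Poly_Mapping.lookup p a * Poly_Mapping.lookup q b))"
    by (simp add: sum_product mult_single)
  finally have "mpoly_eval (p * q) x = (\<Sum>a\<in>Poly_Mapping.keys p. \<Sum>b\<in>Poly_Mapping.keys q.
       Poly_Mapping.lookup p a * Poly_Mapping.lookup q b * (monomial_value x a * monomial_value x b))"
    by (simp add: mpoly_eval_sum mpoly_eval_single monomial_value_add)
  also have "\<dots> = mpoly_eval p x * mpoly_eval q x"
    unfolding mpoly_eval_monomials sum_product by (simp add: algebra_simps)
  finally show ?thesis .
qed

lemma mpoly_eval_one: "mpoly_eval 1 x = 1"
  unfolding mpoly_eval_monomials by (simp add: monomial_value_def)

lemma mpoly_eval_prod: "mpoly_eval (\<Prod>i\<in>A. f i) x = (\<Prod>i\<in>A. mpoly_eval (f i) x)"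
  by (induction A rule: infinite_finite_induct) (auto simp: mpoly_eval_mult mpoly_eval_one)

lemma mpoly_eval_power: "mpoly_eval (p ^ k) x = mpoly_eval p x ^ k"
  by (induction k) (auto simp: mpoly_eval_mult mpoly_eval_one)

lemma mpoly_eval_subst: "mpoly_eval (mpoly_subst s p) x = mpoly_eval p (\<lambda>i. mpoly_eval (s i) x)"
  unfolding mpoly_subst_def mpoly_eval_sum mpoly_eval_mult mpoly_eval_prod mpoly_eval_power
    mpoly_eval_single
  by (simp add: mpoly_eval_def[of p] monomial_value_def)

lemma mpoly_eval_affine_change:
  "mpoly_eval (affine_change ql qu f) x = mpoly_eval f (\<lambda>k. ql k + (qu k - ql k) * x k)"
proof -
  have "mpoly_eval (mpoly_const c) x = c" "mpoly_eval (mpoly_var i) x = x i" for c i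
    unfolding mpoly_const_def mpoly_var_def mpoly_eval_single by (simp_all add: monomial_value_def)
  then show ?thesis
    unfolding affine_change_def mpoly_eval_subst by (simp add: mpoly_eval_add mpoly_eval_mult)
qed

lemma mpoly_eval_homogenize:
  assumes "x 0 = 1"
  shows "mpoly_eval (homogenize g) x = mpoly_eval g x"
proof -
  have "monomial_value x (Poly_Mapping.single 0 d) = 1" for d
    using assms unfolding monomial_value_def by simp
  then show ?thesis
    unfolding homogenize_def mpoly_eval_sum mpoly_eval_single monomial_value_add
    by (simp add: mpoly_eval_monomials[of g])
qed

lemma mpoly_eval_cong_vars:
  assumes "mpoly_vars p \<subseteq> S" "\<And>i. i \<in> S \<Longrightarrow> x i = x' i"
  shows "mpoly_eval p x = mpoly_eval p x'"
  unfolding mpoly_eval_def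
proof (intro sum.cong refl arg_cong2[where f="(*)"] prod.cong)
  fix mn i assume "mn \<in> Poly_Mapping.keys p" "i \<in> Poly_Mapping.keys mn"
  then have "i \<in> S" using assms(1) unfolding mpoly_vars_def by auto
  then show "x i ^ Poly_Mapping.lookup mn i = x' i ^ Poly_Mapping.lookup mn i" using assms(2) by simp
qed

lemma mpoly_vars_mult: "mpoly_vars (p * q) \<subseteq> mpoly_vars p \<union> mpoly_vars q"
proof
  fix i assume "i \<in> mpoly_vars (p * q)"
  then obtain mn where mn: "mn \<in> Poly_Mapping.keys (p * q)" "i \<in> Poly_Mapping.keys mn"
    unfolding mpoly_vars_def by auto
  then obtain a b where ab: "mn = a + b" "a \<in> Poly_Mapping.keys p" "b \<in> Poly_Mapping.keys q"
    using keys_mult[of p q] by blast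
  then have "i \<in> Poly_Mapping.keys a \<union> Poly_Mapping.keys b" using mn(2) keys_add[of a b] by auto
  then show "i \<in> mpoly_vars p \<union> mpoly_vars q" using ab unfolding mpoly_vars_def by auto
qed

lemma continuous_on_mpoly_eval_line: "continuous_on S (\<lambda>s. mpoly_eval p (\<lambda>k. a k + s * b k))"
  unfolding mpoly_eval_def by (intro continuous_intros)

section \<open>The simplices \<open>1 \<ge> q\<^sub>0 \<ge> x\<^sub>\<theta>\<^sub>1 \<ge> \<dots> \<ge> x\<^sub>\<theta>\<^sub>m \<ge> 0\<close> cover the unit cube\<close>

lemma vertex_matrix_coord:
  assumes t: "t \<in> carrier_vec (m+1)" and r: "r \<le> m"
  shows "vec_point m (vertex_matrix m \<theta> *\<^sub>v t) r =
    (\<Sum>k<m+1. (if r = 0 \<or> r \<in> \<theta> ` {1..k} then 1 else 0) * t $ k)"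
  using t r unfolding vec_point_def vertex_matrix_def
  by (auto simp: scalar_prod_def lessThan_atLeast0 intro!: sum.cong)

lemma vertex_image_in_unit_cube:
  assumes t: "t \<in> std_simplex m"
  shows "vec_point m (vertex_matrix m \<theta> *\<^sub>v t) 0 = 1"
    and "r \<in> {1..m} \<Longrightarrow> 0 \<le> vec_point m (vertex_matrix m \<theta> *\<^sub>v t) r \<and>
                          vec_point m (vertex_matrix m \<theta> *\<^sub>v t) r \<le> 1"
proof -
  have tc: "t \<in> carrier_vec (m+1)" and nn: "\<And>i. i < m+1 \<Longrightarrow> 0 \<le> t $ i"
    and s1: "(\<Sum>i<m+1. t $ i) = 1" using t unfolding std_simplex_def by auto
  show "vec_point m (vertex_matrix m \<theta> *\<^sub>v t) 0 = 1"
    unfolding vertex_matrix_coord[OF tc le0] using s1 by simp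
  assume r: "r \<in> {1..m}"
  let ?w = "\<lambda>k. (if r = 0 \<or> r \<in> \<theta> ` {1..k} then 1 else 0) * t $ k"
  have "(\<Sum>k<m+1. ?w k) \<le> (\<Sum>k<m+1. t $ k)" by (rule sum_mono) (use nn in auto)
  moreover have "0 \<le> (\<Sum>k<m+1. ?w k)" by (rule sum_nonneg) (use nn in auto)
  ultimately show "0 \<le> vec_point m (vertex_matrix m \<theta> *\<^sub>v t) r \<and>
                   vec_point m (vertex_matrix m \<theta> *\<^sub>v t) r \<le> 1"
    using vertex_matrix_coord[OF tc, of r] r s1 by simp
qed

lemma sorting_permutation:
  fixes x :: "nat \<Rightarrow> real"
  shows "\<exists>\<theta>. \<theta> permutes {1..m} \<and> (\<forall>k l. 1 \<le> k \<longrightarrow> k \<le> l \<longrightarrow> l \<le> m \<longrightarrow> x (\<theta> l) \<le> x (\<theta> k))"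
proof -
  define xs where "xs = sort_key (\<lambda>i. - x i) [1..<Suc m]"
  have dxs: "distinct xs" and sxs: "set xs = {1..m}" and lxs: "length xs = m"
    and sorted: "sorted (map (\<lambda>i. - x i) xs)" unfolding xs_def by auto
  define \<theta> where "\<theta> k = (if k \<in> {1..m} then xs ! (k - 1) else k)" for k
  have "bij_betw ((!) xs \<circ> (\<lambda>k. k - 1)) {1..m} {1..m}"
  proof (rule bij_betw_trans)
    show "bij_betw (\<lambda>k. k - 1) {1..m} {..<m}" by (rule bij_betw_byWitness[of _ Suc]) auto
    show "bij_betw ((!) xs) {..<m} {1..m}" using bij_betw_nth[OF dxs] lxs sxs by auto
  qed
  then have "bij_betw \<theta> {1..m} {1..m}"
    by (rule bij_betw_cong[THEN iffD1, rotated]) (auto simp: \<theta>_def)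
  then have "\<theta> permutes {1..m}" by (rule bij_imp_permutes) (auto simp: \<theta>_def)
  moreover have "x (\<theta> l) \<le> x (\<theta> k)" if "1 \<le> k" "k \<le> l" "l \<le> m" for k l
  proof -
    have "(map (\<lambda>i. - x i) xs) ! (k - 1) \<le> (map (\<lambda>i. - x i) xs) ! (l - 1)"
      by (rule sorted_nth_mono[OF sorted]) (use that lxs in auto)
    then show ?thesis using that lxs unfolding \<theta>_def by auto
  qed
  ultimately show ?thesis by blast
qed

lemma vertex_matrix_coord_perm:
  assumes t: "t \<in> carrier_vec (m+1)" and \<theta>: "\<theta> permutes {1..m}" and j: "j \<in> {1..m}"
  shows "vec_point m (vertex_matrix m \<theta> *\<^sub>v t) (\<theta> j) = (\<Sum>k\<in>{j..<m+1}. t $ k)"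
proof -
  have \<theta>j: "\<theta> j \<in> {1..m}" using permutes_in_image[OF \<theta>] j by simp
  have iff: "(\<theta> j = 0 \<or> \<theta> j \<in> \<theta> ` {1..k}) \<longleftrightarrow> j \<le> k" for k
  proof
    assume "\<theta> j = 0 \<or> \<theta> j \<in> \<theta> ` {1..k}"
    then obtain i where "i \<in> {1..k}" "\<theta> j = \<theta> i" using \<theta>j by auto
    then show "j \<le> k" using permutes_inj[OF \<theta>] by (metis atLeastAtMost_iff injD)
  qed (use j in auto)
  have "vec_point m (vertex_matrix m \<theta> *\<^sub>v t) (\<theta> j)
      = (\<Sum>k<m+1. (if \<theta> j = 0 \<or> \<theta> j \<in> \<theta> ` {1..k} then 1 else 0) * t $ k)"
    by (rule vertex_matrix_coord[OF t]) (use \<theta>j in auto)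
  also have "\<dots> = (\<Sum>k<m+1. if j \<le> k then t $ k else 0)"
    unfolding iff by (intro sum.cong) auto
  also have "\<dots> = (\<Sum>k\<in>{j..<m+1}. t $ k)"
    by (rule sum.mono_neutral_cong_right) auto
  finally show ?thesis .
qed

text \<open>Every point of the unit cube is the image of a point of the standard simplex under the
  vertex matrix of a sorting permutation; the barycentric coordinates are the successive
  differences of the sorted coordinates.\<close>
lemma unit_cube_covered:
  assumes x: "\<forall>k\<in>{1..m}. 0 \<le> x k \<and> x k \<le> 1"
  shows "\<exists>\<theta> t. \<theta> permutes {1..m} \<and> t \<in> std_simplex m \<and>
     (\<forall>k\<in>{1..m}. vec_point m (vertex_matrix m \<theta> *\<^sub>v t) k = x k)"
proof -
  obtain \<theta> where \<theta>: "\<theta> permutes {1..m}"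
    and mono: "\<And>k l. 1 \<le> k \<Longrightarrow> k \<le> l \<Longrightarrow> l \<le> m \<Longrightarrow> x (\<theta> l) \<le> x (\<theta> k)"
    using sorting_permutation by blast
  have \<theta>_in: "\<theta> k \<in> {1..m}" if "k \<in> {1..m}" for k using permutes_in_image[OF \<theta>] that by simp
  define X where "X k = (if k = 0 then 1 else if k \<le> m then x (\<theta> k) else 0)" for k
  define t where "t = vec (m+1) (\<lambda>k. X k - X (Suc k))"
  have tc: "t \<in> carrier_vec (m+1)" unfolding t_def by simp
  have tails: "(\<Sum>k\<in>{j..<m+1}. t $ k) = X j" if "j \<le> m + 1" for j
  proof -
    have "(\<Sum>k\<in>{j..<m+1}. t $ k) = - (\<Sum>k\<in>{j..<m+1}. X (Suc k) - X k)"
      unfolding t_def by (simp add: sum_negf[symmetric])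
    then show ?thesis using sum_Suc_diff'[of j "m+1" X] that unfolding X_def by auto
  qed
  have "X (Suc k) \<le> X k" if "k \<le> m" for k
    using that x \<theta>_in mono[of k "Suc k"] unfolding X_def by (cases "k = 0") auto
  then have "t \<in> std_simplex m"
    using tails[of 0] tc unfolding std_simplex_def t_def by (auto simp: atLeast0LessThan X_def)
  moreover have "vec_point m (vertex_matrix m \<theta> *\<^sub>v t) r = x r" if r: "r \<in> {1..m}" for r
  proof -
    obtain j where j: "j \<in> {1..m}" "r = \<theta> j"
      using r permutes_image[OF \<theta>] by (metis imageE)
    show ?thesis using vertex_matrix_coord_perm[OF tc \<theta> j(1)] tails[of j] j unfolding X_def by simp
  qed
  ultimately show ?thesis using \<theta> by blast
qed

section \<open>Positivity on the box versus positivity on the simplices\<close>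

definition cube_to_box :: "nat \<Rightarrow> (nat \<Rightarrow> real) \<Rightarrow> (nat \<Rightarrow> real) \<Rightarrow> (nat \<Rightarrow> real) \<Rightarrow> (nat \<Rightarrow> real)" where
  "cube_to_box m ql qu x = (\<lambda>k. if k \<in> {1..m} then ql k + (qu k - ql k) * x k else 0)"

lemma cube_to_box_in_box:
  assumes bounds: "\<forall>k\<in>{1..m}. ql k \<le> qu k" and x: "\<forall>k\<in>{1..m}. 0 \<le> x k \<and> x k \<le> 1"
  shows "cube_to_box m ql qu x \<in> box m ql qu"
proof -
  have "0 \<le> (qu k - ql k) * x k \<and> (qu k - ql k) * x k \<le> qu k - ql k" if "k \<in> {1..m}" for k
    using bounds x that mult_left_le[of "x k" "qu k - ql k"] by auto
  then show ?thesis unfolding box_def cube_to_box_def by (auto simp: add.commute le_diff_eq)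
qed

lemma box_to_cube:
  assumes bounds: "\<forall>k\<in>{1..m}. ql k < qu k" and q: "q \<in> box m ql qu"
  defines "x \<equiv> \<lambda>k. (q k - ql k) / (qu k - ql k)"
  shows "\<forall>k\<in>{1..m}. 0 \<le> x k \<and> x k \<le> 1" and "cube_to_box m ql qu x = q"
proof -
  have q_bounds: "ql k \<le> q k \<and> q k \<le> qu k" if "k \<in> {1..m}" for k
    using q that unfolding box_def by auto
  then show "\<forall>k\<in>{1..m}. 0 \<le> x k \<and> x k \<le> 1"
    using bounds unfolding x_def by (auto simp: divide_le_eq_1)
  show "cube_to_box m ql qu x = q"
  proof
    fix k show "cube_to_box m ql qu x k = q k"
    proof (cases "k \<in> {1..m}")
      case True
      then have "qu k - ql k \<noteq> 0" using bounds by force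
      then show ?thesis using True unfolding cube_to_box_def x_def by simp
    qed (use q in \<open>auto simp: cube_to_box_def box_def\<close>)
  qed
qed

lemma eval_vertex_form:
  assumes vars: "mpoly_vars f \<subseteq> {1..m}" and t: "t \<in> std_simplex m"
  shows "mpoly_eval (homogenize (affine_change ql qu f)) (vec_point m (vertex_matrix m \<theta> *\<^sub>v t))
       = mpoly_eval f (cube_to_box m ql qu (vec_point m (vertex_matrix m \<theta> *\<^sub>v t)))"
proof -
  let ?y = "vec_point m (vertex_matrix m \<theta> *\<^sub>v t)"
  have "mpoly_eval (homogenize (affine_change ql qu f)) ?y = mpoly_eval (affine_change ql qu f) ?y"
    by (rule mpoly_eval_homogenize) (rule vertex_image_in_unit_cube(1)[OF t])
  also have "\<dots> = mpoly_eval f (cube_to_box m ql qu ?y)"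
    unfolding mpoly_eval_affine_change
    using vars by (intro mpoly_eval_cong_vars[of _ "{1..m}"]) (auto simp: cube_to_box_def)
  finally show ?thesis .
qed

text \<open>Positivity of \<open>f\<close> on the box is equivalent to positivity of the \<open>m!\<close> forms on the
  standard simplex: the simplices map into the box and together cover it.\<close>
lemma box_positivity_iff_simplex_positivity:
  assumes vars: "mpoly_vars f \<subseteq> {1..m}" and bounds: "\<forall>k\<in>{1..m}. ql k < qu k"
  shows "(\<forall>\<theta>. \<theta> permutes {1..m} \<longrightarrow> (\<forall>t\<in>std_simplex m.
            mpoly_eval (homogenize (affine_change ql qu f)) (vec_point m (vertex_matrix m \<theta> *\<^sub>v t)) > 0))
     \<longleftrightarrow> (\<forall>q\<in>box m ql qu. mpoly_eval f q > 0)"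
proof
  assume pos: "\<forall>\<theta>. \<theta> permutes {1..m} \<longrightarrow> (\<forall>t\<in>std_simplex m.
    mpoly_eval (homogenize (affine_change ql qu f)) (vec_point m (vertex_matrix m \<theta> *\<^sub>v t)) > 0)"
  show "\<forall>q\<in>box m ql qu. mpoly_eval f q > 0"
  proof
    fix q assume "q \<in> box m ql qu"
    from box_to_cube[OF bounds this] obtain x
      where "\<forall>k\<in>{1..m}. 0 \<le> x k \<and> x k \<le> 1" and q: "cube_to_box m ql qu x = q" by auto
    from unit_cube_covered[OF this(1)] obtain \<theta> t where \<theta>t: "\<theta> permutes {1..m}" "t \<in> std_simplex m"
      and coords: "\<forall>k\<in>{1..m}. vec_point m (vertex_matrix m \<theta> *\<^sub>v t) k = x k" by blast
    have "cube_to_box m ql qu (vec_point m (vertex_matrix m \<theta> *\<^sub>v t)) = q"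
      unfolding q[symmetric] cube_to_box_def using coords by auto
    then show "mpoly_eval f q > 0" using pos \<theta>t eval_vertex_form[OF vars \<theta>t(2)] by metis
  qed
next
  assume "\<forall>q\<in>box m ql qu. mpoly_eval f q > 0"
  moreover have "cube_to_box m ql qu (vec_point m (vertex_matrix m \<theta> *\<^sub>v t)) \<in> box m ql qu"
    if "t \<in> std_simplex m" for \<theta> t
    using bounds vertex_image_in_unit_cube(2)[OF that] by (intro cube_to_box_in_box) auto
  ultimately show "\<forall>\<theta>. \<theta> permutes {1..m} \<longrightarrow> (\<forall>t\<in>std_simplex m.
    mpoly_eval (homogenize (affine_change ql qu f)) (vec_point m (vertex_matrix m \<theta> *\<^sub>v t)) > 0)"
    by (simp add: eval_vertex_form[OF vars])
qed

section \<open>Stability of a matrix family from two scalar conditions\<close>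

lemma hurwitz_conditions_if_stable:
  assumes B: "B \<in> carrier_mat n n" and n: "n \<ge> 1" and st: "hurwitz_stable B"
  shows "coeff (char_poly B) 0 > 0" and "hurwitz_det (char_poly B) n (n - 1) > 0"
proof -
  have deg: "degree (char_poly B) = n" and mon: "lead_coeff (char_poly B) = 1"
    using degree_monic_char_poly[OF B] by auto
  have "stable_poly (char_poly B)" using st hurwitz_stable_iff_stable_char_poly[OF B] by blast
  from stable_poly_pos[OF this mon] hurwitz_det_pos_if_stable[OF deg mon this]
  show "coeff (char_poly B) 0 > 0" and "hurwitz_det (char_poly B) n (n - 1) > 0"
    using deg n by (auto simp: poly_0_coeff_0[symmetric])
qed

lemma no_imaginary_eigenvalue:
  assumes B: "B \<in> carrier_mat n n" and n: "n \<ge> 2"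
    and a0: "coeff (char_poly B) 0 \<noteq> 0" and hd: "hurwitz_det (char_poly B) n (n - 1) \<noteq> 0"
    and ev: "eigenvalue (map_mat complex_of_real B) z"
  shows "Re z \<noteq> 0"
  using degree_monic_char_poly[OF B] n a0 hd ev eigenvalue_iff_root_char_poly[OF B]
  by (intro no_imaginary_root[of "char_poly B" n]) (auto simp: poly_0_coeff_0)

text \<open>Sufficiency for a family: if the family is continuous along the segments from a stable
  member \<open>A q\<^sub>0\<close> and \<open>a\<^sub>0\<close>, \<open>\<Delta>\<^sub>n\<^sub>-\<^sub>1\<close> vanish nowhere, then every member is stable, since
  eigenvalues cannot cross the imaginary axis along a segment.\<close>
lemma hurwitz_stable_family:
  fixes A :: "(nat \<Rightarrow> real) \<Rightarrow> real mat"
  assumes n: "n \<ge> 2" and carr: "\<And>q. q \<in> Q \<Longrightarrow> A q \<in> carrier_mat n n"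
    and star: "\<And>q s. q \<in> Q \<Longrightarrow> s \<in> {0..1} \<Longrightarrow> (\<lambda>k. q0 k + s * (q k - q0 k)) \<in> Q"
    and cont: "\<And>q i j. q \<in> Q \<Longrightarrow> i < n \<Longrightarrow> j < n \<Longrightarrow>
                 continuous_on {0..1} (\<lambda>s. A (\<lambda>k. q0 k + s * (q k - q0 k)) $$ (i,j))"
    and conds: "\<And>q. q \<in> Q \<Longrightarrow>
                  coeff (char_poly (A q)) 0 \<noteq> 0 \<and> hurwitz_det (char_poly (A q)) n (n - 1) \<noteq> 0"
    and q0: "q0 \<in> Q" "hurwitz_stable (A q0)"
    and q: "q \<in> Q"
  shows "hurwitz_stable (A q)"
proof -
  define \<gamma> where "\<gamma> s = (\<lambda>k. q0 k + s * (q k - q0 k))" for s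
  have \<gamma>: "\<gamma> s \<in> Q" if "s \<in> {0..1}" for s unfolding \<gamma>_def using star[OF q that] .
  have "\<forall>s\<in>{0..1}. hurwitz_stable (A (\<gamma> s))"
  proof (rule hurwitz_stable_path)
    show "Re z \<noteq> 0" if "s \<in> {0..1}" "eigenvalue (map_mat complex_of_real (A (\<gamma> s))) z" for s z
      using no_imaginary_eigenvalue[OF carr n _ _ that(2)] conds \<gamma> that(1) by blast
    have "\<gamma> 0 = q0" unfolding \<gamma>_def by simp
    then show "hurwitz_stable (A (\<gamma> 0))" using q0(2) by simp
  qed (use carr \<gamma> cont[OF q] in \<open>auto simp: \<gamma>_def\<close>)
  moreover have "\<gamma> 1 = q" unfolding \<gamma>_def by simp
  ultimately show ?thesis by force
qed

lemma hurwitz_stable_family_iff: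
  fixes A :: "(nat \<Rightarrow> real) \<Rightarrow> real mat"
  assumes n: "n \<ge> 2" and carr: "\<And>q. A q \<in> carrier_mat n n"
    and star: "\<And>q s. q \<in> Q \<Longrightarrow> s \<in> {0..1} \<Longrightarrow> (\<lambda>k. q0 k + s * (q k - q0 k)) \<in> Q"
    and cont: "\<And>q i j. q \<in> Q \<Longrightarrow> i < n \<Longrightarrow> j < n \<Longrightarrow>
                 continuous_on {0..1} (\<lambda>s. A (\<lambda>k. q0 k + s * (q k - q0 k)) $$ (i,j))"
    and q0: "q0 \<in> Q" "hurwitz_stable (A q0)"
  shows "(\<forall>q\<in>Q. hurwitz_stable (A q)) \<longleftrightarrow>
         (\<forall>q\<in>Q. coeff (char_poly (A q)) 0 > 0 \<and> hurwitz_det (char_poly (A q)) n (n - 1) > 0)"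
proof (intro iffI ballI)
  fix q assume "\<forall>q\<in>Q. hurwitz_stable (A q)" "q \<in> Q"
  then show "coeff (char_poly (A q)) 0 > 0 \<and> hurwitz_det (char_poly (A q)) n (n - 1) > 0"
    using hurwitz_conditions_if_stable[OF carr] n by simp
next
  fix q assume "\<forall>q\<in>Q. coeff (char_poly (A q)) 0 > 0 \<and> hurwitz_det (char_poly (A q)) n (n - 1) > 0"
    and "q \<in> Q"
  then show "hurwitz_stable (A q)"
    using hurwitz_stable_family[OF n carr star cont _ q0] by force
qed

section \<open>The robust stability criterion\<close>

lemma box_segment:
  assumes q0: "q0 \<in> box m ql qu" and q: "q \<in> box m ql qu" and s: "s \<in> {0..1}"
  shows "(\<lambda>k. q0 k + s * (q k - q0 k)) \<in> box m ql qu"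
proof -
  have "ql k \<le> q0 k + s * (q k - q0 k) \<and> q0 k + s * (q k - q0 k) \<le> qu k" if k: "k \<in> {1..m}" for k
  proof -
    have e: "q0 k + s * (q k - q0 k) = (1 - s) * q0 k + s * q k" by (simp add: algebra_simps)
    have h: "ql k \<le> q0 k" "q0 k \<le> qu k" "ql k \<le> q k" "q k \<le> qu k"
      using q0 q k unfolding box_def by auto
    have "(1 - s) * ql k \<le> (1 - s) * q0 k" "s * ql k \<le> s * q k"
      "(1 - s) * q0 k \<le> (1 - s) * qu k" "s * q k \<le> s * qu k"
      using h s by (auto intro: mult_left_mono)
    then show ?thesis unfolding e by (simp add: algebra_simps)
  qed
  then show ?thesis using q0 q unfolding box_def by auto
qed

lemma continuous_on_rational_segment:
  assumes "\<And>s. s \<in> {0..1} \<Longrightarrow> mpoly_eval R (\<lambda>k. a k + s * b k) \<noteq> 0"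
  shows "continuous_on {0..1} (\<lambda>s. mpoly_eval P (\<lambda>k. a k + s * b k) / mpoly_eval R (\<lambda>k. a k + s * b k))"
  using assms by (intro continuous_on_divide continuous_on_mpoly_eval_line) auto

theorem lemma1:
  fixes n m :: nat
    and ql qu :: "nat \<Rightarrow> real"
    and P R :: "nat \<Rightarrow> nat \<Rightarrow> mpoly"
    and N1 D1 N2 D2 :: mpoly
    and A :: "(nat \<Rightarrow> real) \<Rightarrow> real mat"
  assumes n2: "n \<ge> 2" and m1: "m \<ge> 1"
    and bounds: "\<forall>k\<in>{1..m}. ql k < qu k"
    and varsPR: "\<forall>i<n. \<forall>j<n. mpoly_vars (P i j) \<subseteq> {1..m} \<and> mpoly_vars (R i j) \<subseteq> {1..m}"
    and denR: "\<forall>i<n. \<forall>j<n. \<forall>q\<in>box m ql qu. mpoly_eval (R i j) q \<noteq> 0"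
    and A_def: "\<forall>q. A q = mat n n (\<lambda>(i,j). mpoly_eval (P i j) q / mpoly_eval (R i j) q)"
    and stab_point: "\<exists>q\<in>box m ql qu. hurwitz_stable (A q)"
    and varsND: "mpoly_vars N1 \<subseteq> {1..m}" "mpoly_vars D1 \<subseteq> {1..m}"
                "mpoly_vars N2 \<subseteq> {1..m}" "mpoly_vars D2 \<subseteq> {1..m}"
    and denD: "\<forall>q\<in>box m ql qu. mpoly_eval D1 q \<noteq> 0 \<and> mpoly_eval D2 q \<noteq> 0"
    and a0_eq: "\<forall>q\<in>box m ql qu.
                  coeff (char_poly (A q)) 0 = mpoly_eval N1 q / mpoly_eval D1 q"
    and Delta_eq: "\<forall>q\<in>box m ql qu.
                  lead_minor (hurwitz_matrix (char_poly (A q))) (n - 1)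
                    = mpoly_eval N2 q / mpoly_eval D2 q"
  shows "(\<forall>q\<in>box m ql qu. hurwitz_stable (A q)) \<longleftrightarrow>
         (\<forall>f\<in>{N1 * D1, N2 * D2}. \<forall>\<theta>. \<theta> permutes {1..m} \<longrightarrow>
            (\<forall>t\<in>std_simplex m.
               mpoly_eval (homogenize (affine_change ql qu f))
                 (vec_point m (vertex_matrix m \<theta> *\<^sub>v t)) > 0))"
proof -
  have carr: "A q \<in> carrier_mat n n" for q using A_def by simp
  have Delta: "lead_minor (hurwitz_matrix (char_poly (A q))) (n - 1) = hurwitz_det (char_poly (A q)) n (n - 1)"
    for q using degree_monic_char_poly[OF carr] n2 by (intro lead_minor_hurwitz_matrix) auto
  text \<open>\<open>N\<^sub>i D\<^sub>i\<close> has the sign of \<open>N\<^sub>i / D\<^sub>i\<close> wherever \<open>D\<^sub>i \<noteq> 0\<close>.\<close>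
  have sign: "mpoly_eval (N1 * D1) q > 0 \<longleftrightarrow> coeff (char_poly (A q)) 0 > 0"
             "mpoly_eval (N2 * D2) q > 0 \<longleftrightarrow> hurwitz_det (char_poly (A q)) n (n - 1) > 0"
    if "q \<in> box m ql qu" for q
    using that a0_eq Delta_eq Delta
    by (simp_all add: mpoly_eval_mult zero_less_divide_iff zero_less_mult_iff)
  have vars: "mpoly_vars (N1 * D1) \<subseteq> {1..m}" "mpoly_vars (N2 * D2) \<subseteq> {1..m}"
    using mpoly_vars_mult varsND by blast+
  have simplex_conditions: "(\<forall>f\<in>{N1 * D1, N2 * D2}. \<forall>\<theta>. \<theta> permutes {1..m} \<longrightarrow>
            (\<forall>t\<in>std_simplex m. mpoly_eval (homogenize (affine_change ql qu f))
                                  (vec_point m (vertex_matrix m \<theta> *\<^sub>v t)) > 0))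
      \<longleftrightarrow> (\<forall>q\<in>box m ql qu. coeff (char_poly (A q)) 0 > 0 \<and> hurwitz_det (char_poly (A q)) n (n - 1) > 0)"
    using box_positivity_iff_simplex_positivity[OF vars(1) bounds]
      box_positivity_iff_simplex_positivity[OF vars(2) bounds] sign by auto
  have cont: "continuous_on {0..1} (\<lambda>s. A (\<lambda>k. q0 k + s * (q k - q0 k)) $$ (i,j))"
    if "q0 \<in> box m ql qu" "q \<in> box m ql qu" "i < n" "j < n" for q0 q i j
    using continuous_on_rational_segment[where P="P i j" and R="R i j" and a=q0 and b="\<lambda>k. q k - q0 k"]
      denR box_segment[OF that(1,2)] that(3,4) A_def by auto
  obtain q0 where q0: "q0 \<in> box m ql qu" "hurwitz_stable (A q0)" using stab_point by blast
  have "(\<forall>q\<in>box m ql qu. hurwitz_stable (A q))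
      \<longleftrightarrow> (\<forall>q\<in>box m ql qu. coeff (char_poly (A q)) 0 > 0 \<and> hurwitz_det (char_poly (A q)) n (n - 1) > 0)"
    by (rule hurwitz_stable_family_iff[OF n2 carr box_segment[OF q0(1)] cont[OF q0(1)] q0])
  then show ?thesis unfolding simplex_conditions .
qed

end
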